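(* Let $F\in L^p(\mu)$, $p>1$. Then $E[F\mid U_\lambda=w]\in L^{p'}(\mu)$ for every $p'<p$, and the map $\lambda\mapsto E[F\mid U_\lambda=w]$ is weakly continuous with values in $L^{p'}(\mu)$ for every $p'<p$.
   Context: Setting: $W=C_0([0,1],\mathbb R^d)$ with Wiener measure $\mu$, completed Brownian filtration $(\mathcal F_t)$, Cameron–Martin space $H$ ($|h|_H^2=\int_0^1|\dot h|^2ds$). For real $\lambda$, $U_\lambda(t,w)=W_t(w)+\int_0^t\dot u_\lambda(s,w)ds$ with $\dot u_\lambda$ adapted and square integrable, $u_\lambda=\int_0^\cdot\dot u_\lambda ds$, $E[\rho(-\delta u_\lambda)]=1$ where $\rho(-\delta u_\lambda)=\exp(-\int_0^1\dot u_\lambda dW-\frac12\int_0^1|\dot u_\lambda|^2ds)$; $\lambda\mapsto\dot u_\lambda$ is differentiable in $L^2$ with $u_\lambda$ essentially bounded uniformly in $\lambda$. $L_\lambda=dU_\lambda\mu/d\mu$, and it is assumed (as established under the hypotheses of the preceding theorem) that $\lambda\mapsto L_\lambda$ and $\lambda\mapsto L_\lambda^{-1}$ are a.s. and strongly continuous in $L^p(\mu)$. $E[F\mid U_\lambda=w]$ denotes a measurable $g$ with $E[F\mid U_\lambda]=g\circ U_\lambda$ a.s. *)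

theory Defs
  imports "HOL-Probability.Probability"
begin

text \<open>Paths in R^d, indexed by the finite type 'd.  The path space
  W = C_0([0,1],R^d) is represented by continuous functions on [0,1]
  vanishing at 0, normalised to be 0 outside [0,1].\<close>

type_synonym 'd path = "real \<Rightarrow> real^'d"

definition path_carrier :: "'d::finite path set" where
  "path_carrier = {w. continuous_on {0..1} w \<and> w 0 = 0 \<and> (\<forall>t. t \<notin> {0..1} \<longrightarrow> w t = 0)}"

text \<open>Sigma-algebra generated by the coordinate maps W_r, r in [0,s]
  (the raw Brownian filtration); for s = 1 this is the Borel sigma-algebra of W.\<close>
definition filt :: "real \<Rightarrow> 'd::finite path measure" where
  "filt s = sigma path_carrier
     {{w \<in> path_carrier. w r \<in> A} | r A. r \<in> {0..s} \<and> A \<in> sets borel}"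

definition path_space :: "'d::finite path measure" where
  "path_space = filt 1"

definition wiener_measure :: "'d::finite path measure \<Rightarrow> bool" where
  "wiener_measure \<mu> \<longleftrightarrow> prob_space \<mu> \<and> sets \<mu> = sets path_space \<and>
     (\<forall>(n::nat) (t::nat \<Rightarrow> real). t 0 = 0 \<and> t n \<le> 1 \<and> (\<forall>k<n. t k < t (Suc k)) \<longrightarrow>
        prob_space.indep_vars \<mu> (\<lambda>_. borel)
           (\<lambda>(k, i) w. (w (t (Suc k)) - w (t k)) $ i) ({..<n} \<times> UNIV) \<and>
        (\<forall>k<n. \<forall>i. distributed \<mu> lborel (\<lambda>w. (w (t (Suc k)) - w (t k)) $ i)
                       (normal_density 0 (sqrt (t (Suc k) - t k)))))"

text \<open>A set is in the completed filtration F_s iff it is measurable w.r.t. F_s up to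
  a mu-null set; a process is adapted to the completed filtration if for each s its
  time-s value agrees a.e. with an F_s-measurable map.\<close>
definition adapted :: "'d::finite path measure \<Rightarrow> (real \<Rightarrow> 'd path \<Rightarrow> real^'d) \<Rightarrow> bool" where
  "adapted \<mu> v \<longleftrightarrow> (\<forall>s\<in>{0..1}. \<exists>f \<in> borel_measurable (filt s). AE w in \<mu>. v s w = f w)"

definition time_path :: "'d::finite path measure \<Rightarrow> (real \<times> 'd path) measure" where
  "time_path \<mu> = restrict_space lborel {0..1} \<Otimes>\<^sub>M \<mu>"

definition sq_int_process :: "'d::finite path measure \<Rightarrow> (real \<Rightarrow> 'd path \<Rightarrow> real^'d) \<Rightarrow> bool" where
  "sq_int_process \<mu> v \<longleftrightarrow> (\<lambda>(s, w). v s w) \<in> borel_measurable (time_path \<mu>) \<and>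
     integrable (time_path \<mu>) (\<lambda>(s, w). (norm (v s w))\<^sup>2)"

definition simple_proc :: "nat \<Rightarrow> (nat \<Rightarrow> real) \<Rightarrow> (nat \<Rightarrow> 'd path \<Rightarrow> real^'d) \<Rightarrow> real \<Rightarrow> 'd::finite path \<Rightarrow> real^'d" where
  "simple_proc n t \<xi> s w = (\<Sum>k<n. indicator {t k..<t (Suc k)} s *\<^sub>R \<xi> k w)"

definition simple_int :: "nat \<Rightarrow> (nat \<Rightarrow> real) \<Rightarrow> (nat \<Rightarrow> 'd path \<Rightarrow> real^'d) \<Rightarrow> 'd::finite path \<Rightarrow> real" where
  "simple_int n t \<xi> w = (\<Sum>k<n. \<xi> k w \<bullet> (w (t (Suc k)) - w (t k)))"

definition simple_adapted :: "nat \<Rightarrow> (nat \<Rightarrow> real) \<Rightarrow> (nat \<Rightarrow> 'd path \<Rightarrow> real^'d) \<Rightarrow> bool" where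
  "simple_adapted n t \<xi> \<longleftrightarrow> t 0 = 0 \<and> t n = 1 \<and> (\<forall>k<n. t k < t (Suc k)) \<and>
     (\<forall>k<n. \<xi> k \<in> borel_measurable (filt (t k)) \<and> (\<exists>C. \<forall>w. norm (\<xi> k w) \<le> C))"

text \<open>I is (a version of) the Ito integral int_0^1 v dW: the L^2(mu) limit of the
  integrals of simple adapted processes converging to v in L^2(dt x d mu).\<close>
definition ito_integral :: "'d::finite path measure \<Rightarrow> (real \<Rightarrow> 'd path \<Rightarrow> real^'d) \<Rightarrow> ('d path \<Rightarrow> real) \<Rightarrow> bool" where
  "ito_integral \<mu> v I \<longleftrightarrow> I \<in> borel_measurable \<mu> \<and> integrable \<mu> (\<lambda>w. (I w)\<^sup>2) \<and>
     (\<exists>n t \<xi>. (\<forall>m. simple_adapted (n m) (t m) (\<xi> m)) \<and>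
        (\<lambda>m. \<integral>(s, w). (norm (simple_proc (n m) (t m) (\<xi> m) s w - v s w))\<^sup>2 \<partial>time_path \<mu>)
           \<longlonglongrightarrow> 0 \<and>
        (\<lambda>m. \<integral>w. (I w - simple_int (n m) (t m) (\<xi> m) w)\<^sup>2 \<partial>\<mu>) \<longlonglongrightarrow> 0)"

text \<open>|u|_H^2 for u = int_0^. v ds.\<close>
definition H_norm_sq :: "(real \<Rightarrow> real^'d::finite) \<Rightarrow> real" where
  "H_norm_sq v = (LINT s:{0..1}|lborel. (norm (v s))\<^sup>2)"

text \<open>U(t,w) = W_t(w) + int_0^t v(s,w) ds (on the full-measure set where
  s \<mapsto> v s w is square integrable; the identity elsewhere).\<close>
definition perturb :: "(real \<Rightarrow> 'd path \<Rightarrow> real^'d) \<Rightarrow> 'd::finite path \<Rightarrow> 'd path" where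
  "perturb v w = (if set_integrable lborel {0..1} (\<lambda>s. (norm (v s w))\<^sup>2)
     then (\<lambda>t. if t \<in> {0..1} then w t + (LINT s:{0..t}|lborel. v s w) else 0)
     else w)"

end

theory Submission
  imports Defs
begin

(* Proof idea.
   (1) By conditional Jensen, g l \<circ> U_l \<in> L^p, i.e. L l |g l|^p is integrable.  Since 1/L l
       has moments of every order, splitting according to the size of L l gives g l \<in> L^{p'}.
   (2) For a test function h of the dual space, E[g l h] = E[F Y l] with Y l = (h / L l) \<circ> U_l.
       Along a subsequence of any k n \<rightarrow> l we get Y (k n) \<rightarrow> Y l a.s.; the dual moments
       E|Y (k n)|^{p*} = E[|h|^{p*} (1/L (k n))^{p*-1}] converge, so by Scheffe and Young's
       inequality F Y (k n) \<rightarrow> F Y l in L^1.  Continuity follows by the subsequence principle.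
   (3) The a.s. convergence rests on f \<circ> U (k n) \<rightarrow> f \<circ> U_l in probability for every
       measurable f.  This holds for any maps whose image densities converge in L^1 and which
       converge pointwise on an intersection-stable generator of the \<sigma>-algebra: by Dynkin's
       theorem for all indicators, then for simple functions, then for all f.
   (4) On Wiener space the L^2-differentiability of the drifts yields, along a subsequence,
       pointwise convergence of the perturbed paths, hence (3) for the generator of cylinder sets. *)

(* A power below 1 is at most 1, above 1 it grows with the exponent. *)
lemma powr_le_1_plus_powr:
  fixes x t Q :: real
  assumes "0 \<le> x" "0 < t" "t \<le> Q"
  shows "x powr t \<le> 1 + x powr Q"
proof (cases "x \<le> 1")
  case True
  then have "x powr t \<le> 1" using assms by (simp add: powr_le1)
  then show ?thesis using powr_ge_zero[of x Q] by linarith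
next
  case False
  then have "x powr t \<le> x powr Q" using assms by (intro powr_mono) auto
  then show ?thesis by linarith
qed

(* Splitting a^r against a weight b: either b a^s \<ge> 1, or a is bounded by a power of 1/b.
   This is how the L^{p'} norm of g is controlled by the weighted L^p norm. *)
lemma powr_le_weighted_split:
  fixes a b r s :: real
  assumes a: "0 \<le> a" and b: "0 < b" and s: "0 < s" and r: "0 < r"
  shows "a powr r \<le> b * a powr (r + s) + (1 + (1 / b) powr (r / s + 1))"
proof (cases "a = 0")
  case True
  then show ?thesis using powr_ge_zero[of "1/b" "r/s+1"] by simp
next
  case False
  then have a0: "0 < a" using a by simp
  have nn: "0 \<le> b * a powr (r + s)" "0 \<le> 1 + (1 / b) powr (r / s + 1)"
    using b by (auto intro: add_nonneg_nonneg)
  show ?thesis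
  proof (cases "1 \<le> b * a powr s")
    case True
    have "a powr r \<le> a powr r * (b * a powr s)" using True by (simp add: mult_le_cancel_left1)
    also have "\<dots> = b * a powr (r + s)" by (simp add: powr_add)
    finally show ?thesis using nn by linarith
  next
    case False
    then have "a powr s < 1 / b" using b by (simp add: field_simps)
    then have "(a powr s) powr (1/s) \<le> (1/b) powr (1/s)" using s a0 by (intro powr_mono2) auto
    then have "a \<le> (1/b) powr (1/s)" using s a0 by (simp add: powr_powr)
    then have "a powr r \<le> ((1/b) powr (1/s)) powr r" using r a0 by (intro powr_mono2) auto
    also have "\<dots> = (1/b) powr (r/s)" by (simp add: powr_powr)
    also have "\<dots> \<le> 1 + (1/b) powr (r/s + 1)" using b s r by (intro powr_le_1_plus_powr) auto
    finally show ?thesis using nn by linarith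
  qed
qed

lemma powr_le_two_powr_dist:
  fixes a b Q :: real
  assumes "0 \<le> a" "0 \<le> b" "0 < Q"
  shows "a powr Q \<le> 2 powr Q * (\<bar>a - b\<bar> powr Q + b powr Q)"
proof -
  have "a \<le> 2 * max \<bar>a - b\<bar> b" using assms by (auto simp: max_def abs_if)
  then have "a powr Q \<le> (2 * max \<bar>a - b\<bar> b) powr Q" using assms by (intro powr_mono2) auto
  also have "\<dots> = 2 powr Q * max \<bar>a - b\<bar> b powr Q" using assms by (simp add: powr_mult)
  also have "max \<bar>a - b\<bar> b powr Q \<le> \<bar>a - b\<bar> powr Q + b powr Q"
    by (auto simp: max_def)
  then have "2 powr Q * max \<bar>a - b\<bar> b powr Q \<le> 2 powr Q * (\<bar>a - b\<bar> powr Q + b powr Q)"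
    by (intro mult_left_mono) auto
  finally show ?thesis .
qed

lemma mult_powr_divide:
  fixes x b q :: real
  assumes "0 \<le> x" "0 < b"
  shows "b * (x / b) powr q = x powr q * (1 / b) powr (q - 1)"
proof -
  have "b * (x / b) powr q = x powr q * (b / b powr q)" using assms by (simp add: powr_divide)
  also have "b / b powr q = b powr (1 - q)" using assms by (simp add: powr_diff)
  also have "\<dots> = 1 / b powr (q - 1)" using powr_minus_divide[of b "q - 1"] by simp
  also have "\<dots> = (1 / b) powr (q - 1)" using assms by (simp add: powr_divide)
  finally show ?thesis .
qed

(* Young's inequality with the exponent pair (s/q, its dual), used to dominate
   |a|^q x^(q-1) when a lies in the larger space L^s. *)
lemma powr_mult_le_young:
  fixes a x q s :: real
  assumes a: "0 \<le> a" and x: "0 \<le> x" and q: "1 < q" and s: "q < s"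
  shows "a powr q * x powr (q - 1) \<le> a powr s + (1 + x powr (max 1 ((q - 1) * ((s / q) / (s / q - 1)))))"
proof -
  define A where "A = s / q"
  define B where "B = A / (A - 1)"
  have A1: "1 < A" using q s by (simp add: A_def field_simps)
  have B1: "1 < B" using A1 by (simp add: B_def field_simps)
  have AB: "1 / A + 1 / B = 1" using A1 by (simp add: B_def field_simps)
  have "a powr q * x powr (q - 1) \<le> (a powr q) powr A / A + (x powr (q - 1)) powr B / B"
    by (rule Youngs_inequality[OF A1 B1 AB]) auto
  also have "(a powr q) powr A = a powr s" using q by (simp add: powr_powr A_def)
  also have "(x powr (q - 1)) powr B = x powr ((q - 1) * B)" by (simp add: powr_powr)
  also have "a powr s / A \<le> a powr s" using A1 by (simp add: divide_le_eq mult_le_cancel_left1)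
  also have "x powr ((q - 1) * B) / B \<le> x powr ((q - 1) * B)"
    using B1 by (simp add: divide_le_eq mult_le_cancel_left1)
  also have "x powr ((q - 1) * B) \<le> 1 + x powr (max 1 ((q - 1) * B))"
    by (rule powr_le_1_plus_powr) (use x q B1 in auto)
  finally show ?thesis by (simp add: B_def A_def)
qed

lemma min1_abs_add: "min 1 \<bar>x + y\<bar> \<le> min 1 \<bar>x\<bar> + min 1 \<bar>y :: real\<bar>"
  by (auto simp: min_def abs_if)

lemma min1_abs_mult: "min 1 \<bar>c * x\<bar> \<le> (1 + \<bar>c\<bar>) * min 1 \<bar>x :: real\<bar>"
proof (cases "\<bar>x\<bar> \<le> 1")
  case True
  then have "min 1 \<bar>c * x\<bar> \<le> \<bar>c\<bar> * \<bar>x\<bar>" by (simp add: abs_mult)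
  also have "\<dots> \<le> (1 + \<bar>c\<bar>) * \<bar>x\<bar>" by (intro mult_right_mono) auto
  finally show ?thesis using True by (simp add: min_def)
next
  case False
  then have "min 1 \<bar>x\<bar> = 1" by simp
  moreover have "min 1 \<bar>c * x\<bar> \<le> 1" by simp
  ultimately show ?thesis by simp
qed

lemma LIMSEQ_by_subsequences:
  fixes x :: "nat \<Rightarrow> real"
  assumes "\<And>r::nat\<Rightarrow>nat. strict_mono r \<Longrightarrow> \<exists>s::nat\<Rightarrow>nat. strict_mono s \<and> (\<lambda>n. x (r (s n))) \<longlonglongrightarrow> a"
  shows "x \<longlonglongrightarrow> a"
proof (rule ccontr)
  assume "\<not> x \<longlonglongrightarrow> a"
  then obtain e where e: "e > 0" and "\<exists>\<^sub>F n in sequentially. \<not> dist (x n) a < e"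
    unfolding tendsto_iff by (auto simp: not_eventually)
  then have "infinite {n. \<not> dist (x n) a < e}"
    by (simp add: frequently_cofinite[symmetric] cofinite_eq_sequentially)
  then obtain r :: "nat \<Rightarrow> nat" where r: "strict_mono r" "\<And>n. r n \<in> {n. \<not> dist (x n) a < e}"
    using infinite_enumerate by blast
  obtain s where s: "strict_mono s" "(\<lambda>n. x (r (s n))) \<longlonglongrightarrow> a" using assms r(1) by blast
  then have "eventually (\<lambda>n. dist (x (r (s n))) a < e) sequentially" using e by (simp add: tendsto_iff)
  then obtain n where "dist (x (r (s n))) a < e" by (auto dest: eventually_happens)
  then show False using r(2)[of "s n"] by simp
qed

lemma continuous_on_by_subsequences:
  fixes \<Phi> :: "real \<Rightarrow> real"
  assumes "\<And>l k. k \<longlonglongrightarrow> l \<Longrightarrow> \<exists>r::nat\<Rightarrow>nat. strict_mono r \<and> (\<lambda>n. \<Phi> (k (r n))) \<longlonglongrightarrow> \<Phi> l"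
  shows "continuous_on UNIV \<Phi>"
proof (rule continuous_on_sequentiallyI)
  fix k :: "nat \<Rightarrow> real" and l assume kl: "k \<longlonglongrightarrow> l"
  show "(\<lambda>n. \<Phi> (k n)) \<longlonglongrightarrow> \<Phi> l"
  proof (rule LIMSEQ_by_subsequences)
    fix r :: "nat \<Rightarrow> nat" assume "strict_mono r"
    then have "(\<lambda>n. k (r n)) \<longlonglongrightarrow> l" using LIMSEQ_subseq_LIMSEQ[OF kl] by (simp add: o_def)
    then show "\<exists>s. strict_mono s \<and> (\<lambda>n. \<Phi> (k (r (s n)))) \<longlonglongrightarrow> \<Phi> l" using assms by blast
  qed
qed

lemma tendsto_0_squeeze:
  fixes a s :: "nat \<Rightarrow> real"
  assumes "s \<longlonglongrightarrow> 0" "\<And>n. 0 \<le> a n" "\<And>n. a n \<le> s n"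
  shows "a \<longlonglongrightarrow> 0"
  by (rule tendsto_sandwich[where f="\<lambda>n. 0" and h=s]) (use assms in auto)

lemma tendsto_0_by_eps:
  fixes x :: "nat \<Rightarrow> real"
  assumes "\<And>e. 0 < e \<Longrightarrow> eventually (\<lambda>n. x n \<le> e) sequentially" "\<And>n. 0 \<le> x n"
  shows "x \<longlonglongrightarrow> 0"
proof (rule order_tendstoI)
  fix a :: real assume "0 < a"
  then have "eventually (\<lambda>n. x n \<le> a / 2) sequentially" using assms(1)[of "a/2"] by simp
  then show "eventually (\<lambda>n. x n < a) sequentially" by eventually_elim (use \<open>0 < a\<close> in auto)
next
  fix a :: real assume "a < 0"
  then show "eventually (\<lambda>n. a < x n) sequentially"
    using assms(2) by (intro always_eventually allI) (rule less_le_trans)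
qed

lemma min1_abs_tendsto_0:
  fixes a :: "nat \<Rightarrow> real"
  assumes "(\<lambda>n. min 1 \<bar>a n\<bar>) \<longlonglongrightarrow> 0"
  shows "a \<longlonglongrightarrow> 0"
proof -
  have "eventually (\<lambda>n. min 1 \<bar>a n\<bar> < 1) sequentially"
    using assms by (rule order_tendstoD) simp
  then have "eventually (\<lambda>n. min 1 \<bar>a n\<bar> = \<bar>a n\<bar>) sequentially"
    by eventually_elim (auto simp: min_def)
  then have "(\<lambda>n. \<bar>a n\<bar>) \<longlonglongrightarrow> 0" using assms by (rule Lim_transform_eventually[rotated])
  then show ?thesis by (simp add: tendsto_rabs_zero_iff)
qed

lemma integral_tendsto_of_L1:
  fixes f :: "nat \<Rightarrow> 'a \<Rightarrow> real"
  assumes "\<And>n. integrable M (f n)" "integrable M fl" "(\<lambda>n. \<integral>x. \<bar>f n x - fl x\<bar> \<partial>M) \<longlonglongrightarrow> 0"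
  shows "(\<lambda>n. integral\<^sup>L M (f n)) \<longlonglongrightarrow> integral\<^sup>L M fl"
proof -
  have bnd: "\<bar>integral\<^sup>L M (f n) - integral\<^sup>L M fl\<bar> \<le> (\<integral>x. \<bar>f n x - fl x\<bar> \<partial>M)" for n
    using integral_norm_bound[of M "\<lambda>x. f n x - fl x"] assms(1,2) by simp
  have "(\<lambda>n. \<bar>integral\<^sup>L M (f n) - integral\<^sup>L M fl\<bar>) \<longlonglongrightarrow> 0"
    by (rule tendsto_0_squeeze[OF assms(3) _ bnd]) simp
  then show ?thesis by (simp add: LIM_zero_iff tendsto_rabs_zero_iff)
qed

lemma AE_abs_le_of_dominated_limit:
  fixes Z G :: "nat \<Rightarrow> 'a \<Rightarrow> real" and Zl Gl :: "'a \<Rightarrow> real"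
  assumes lim: "AE x in M. (\<lambda>n. Z n x) \<longlonglongrightarrow> Zl x"
    and dom: "\<And>n. AE x in M. \<bar>Z n x\<bar> \<le> G n x"
    and Gi: "\<And>n. integrable M (G n)" and Gli: "integrable M Gl"
    and GL1: "(\<lambda>n. \<integral>x. \<bar>G n x - Gl x\<bar> \<partial>M) \<longlonglongrightarrow> 0"
  shows "AE x in M. \<bar>Zl x\<bar> \<le> Gl x"
proof -
  obtain r :: "nat \<Rightarrow> nat" where r: "strict_mono r"
    and rlim: "AE x in M. (\<lambda>n. G (r n) x - Gl x) \<longlonglongrightarrow> 0"
    using tendsto_L1_AE_subseq[of M "\<lambda>n x. G n x - Gl x"] Gi Gli GL1 by auto
  have "AE x in M. \<forall>n. \<bar>Z n x\<bar> \<le> G n x" using dom by (simp add: AE_all_countable)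
  then show ?thesis using rlim lim
  proof eventually_elim
    case (elim x)
    have l1: "(\<lambda>n. \<bar>Z (r n) x\<bar>) \<longlonglongrightarrow> \<bar>Zl x\<bar>"
      using tendsto_rabs[OF LIMSEQ_subseq_LIMSEQ[OF elim(3) r]] by (simp add: o_def)
    have l2: "(\<lambda>n. G (r n) x) \<longlonglongrightarrow> Gl x"
      using tendsto_add[OF elim(2) tendsto_const[of "Gl x"]] by simp
    show ?case by (rule LIMSEQ_le[OF l1 l2]) (use elim(1) in auto)
  qed
qed

lemma L1_convergence_by_converging_domination:
  fixes Z G :: "nat \<Rightarrow> 'a \<Rightarrow> real" and Zl Gl :: "'a \<Rightarrow> real"
  assumes Zm: "\<And>n. Z n \<in> borel_measurable M" and Zlm: "Zl \<in> borel_measurable M"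
    and lim: "AE x in M. (\<lambda>n. Z n x) \<longlonglongrightarrow> Zl x"
    and dom: "\<And>n. AE x in M. \<bar>Z n x\<bar> \<le> G n x"
    and Gi: "\<And>n. integrable M (G n)" and Gli: "integrable M Gl"
    and GL1: "(\<lambda>n. \<integral>x. \<bar>G n x - Gl x\<bar> \<partial>M) \<longlonglongrightarrow> 0"
  shows "(\<lambda>n. \<integral>x. \<bar>Z n x - Zl x\<bar> \<partial>M) \<longlonglongrightarrow> 0"
proof -
  have [measurable]: "Z n \<in> borel_measurable M" "G n \<in> borel_measurable M" for n using Zm Gi by auto
  have [measurable]: "Zl \<in> borel_measurable M" "Gl \<in> borel_measurable M" using Zlm Gli by auto
  have Zb: "AE x in M. \<bar>Zl x\<bar> \<le> Gl x"
    by (rule AE_abs_le_of_dominated_limit[OF lim dom Gi Gli GL1])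
  (* split |Z n - Zl| into a part dominated by 2 Gl and the excess |G n - Gl| *)
  define D where "D n x = min \<bar>Z n x - Zl x\<bar> (2 * Gl x)" for n x
  have [measurable]: "D n \<in> borel_measurable M" for n unfolding D_def by measurable
  have Dlim: "(\<lambda>n. integral\<^sup>L M (D n)) \<longlonglongrightarrow> integral\<^sup>L M (\<lambda>x. 0)"
  proof (rule integral_dominated_convergence[where w="\<lambda>x. 2 * Gl x"])
    show "AE x in M. (\<lambda>n. D n x) \<longlonglongrightarrow> 0" using lim Zb
    proof eventually_elim
      case (elim x)
      have "(\<lambda>n. min \<bar>Z n x - Zl x\<bar> (2 * Gl x)) \<longlonglongrightarrow> min \<bar>Zl x - Zl x\<bar> (2 * Gl x)"
        by (intro tendsto_intros elim(1))
      then show ?case using elim(2) unfolding D_def by (simp add: min_def)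
    qed
    show "AE x in M. norm (D n x) \<le> 2 * Gl x" for n using Zb
      by eventually_elim (auto simp: D_def)
  qed (use Gli in auto)
  have bnd: "AE x in M. \<bar>Z n x - Zl x\<bar> \<le> D n x + \<bar>G n x - Gl x\<bar>" for n
    using dom[of n] Zb by eventually_elim (auto simp: D_def min_def)
  have intD: "integrable M (D n)" for n
    by (rule Bochner_Integration.integrable_bound[where f="\<lambda>x. 2 * Gl x"])
       (use Gli Zb in \<open>auto simp: D_def\<close>)
  have intG: "integrable M (\<lambda>x. \<bar>G n x - Gl x\<bar>)" for n using Gi Gli by auto
  have intZ: "integrable M (\<lambda>x. \<bar>Z n x - Zl x\<bar>)" for n
  proof (rule Bochner_Integration.integrable_bound[where f="\<lambda>x. D n x + \<bar>G n x - Gl x\<bar>"])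
    show "integrable M (\<lambda>x. D n x + \<bar>G n x - Gl x\<bar>)" using intD intG by auto
    show "AE x in M. norm \<bar>Z n x - Zl x\<bar> \<le> norm (D n x + \<bar>G n x - Gl x\<bar>)"
      using bnd[of n] Zb by eventually_elim (auto simp: D_def)
  qed auto
  have Zbnd: "(\<integral>x. \<bar>Z n x - Zl x\<bar> \<partial>M) \<le> integral\<^sup>L M (D n) + (\<integral>x. \<bar>G n x - Gl x\<bar> \<partial>M)" for n
  proof -
    have "(\<integral>x. \<bar>Z n x - Zl x\<bar> \<partial>M) \<le> (\<integral>x. D n x + \<bar>G n x - Gl x\<bar> \<partial>M)"
      by (rule integral_mono_AE[OF intZ _ bnd]) (use intD intG in auto)
    then show ?thesis using intD intG by simp
  qed
  have "(\<lambda>n. integral\<^sup>L M (D n) + (\<integral>x. \<bar>G n x - Gl x\<bar> \<partial>M)) \<longlonglongrightarrow> 0"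
    using tendsto_add[OF Dlim GL1] by simp
  then show ?thesis by (rule tendsto_0_squeeze[OF _ _ Zbnd]) simp
qed

lemma scheffe_nonneg:
  fixes Z :: "nat \<Rightarrow> 'a \<Rightarrow> real"
  assumes Zi: "\<And>n. integrable M (Z n)" and Zli: "integrable M Zl"
    and nn: "\<And>n. AE x in M. 0 \<le> Z n x"
    and lim: "AE x in M. (\<lambda>n. Z n x) \<longlonglongrightarrow> Zl x"
    and ilim: "(\<lambda>n. integral\<^sup>L M (Z n)) \<longlonglongrightarrow> integral\<^sup>L M Zl"
  shows "(\<lambda>n. \<integral>x. \<bar>Z n x - Zl x\<bar> \<partial>M) \<longlonglongrightarrow> 0"
proof -
  have [measurable]: "Z n \<in> borel_measurable M" "Zl \<in> borel_measurable M" for n using Zi Zli by auto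
  have nnl: "AE x in M. 0 \<le> Zl x"
  proof -
    have "AE x in M. \<forall>n. 0 \<le> Z n x" using nn by (simp add: AE_all_countable)
    then show ?thesis using lim
      by eventually_elim (rule LIMSEQ_le_const, auto)
  qed
  (* |Z n - Zl| = (Z n - Zl) + 2 (Zl - Z n)^+, and the positive part is dominated by Zl *)
  define P where "P n x = max 0 (Zl x - Z n x)" for n x
  have [measurable]: "P n \<in> borel_measurable M" for n unfolding P_def by measurable
  have Plim: "(\<lambda>n. integral\<^sup>L M (P n)) \<longlonglongrightarrow> integral\<^sup>L M (\<lambda>x. 0)"
  proof (rule integral_dominated_convergence[where w="Zl"])
    show "AE x in M. (\<lambda>n. P n x) \<longlonglongrightarrow> 0" using lim
    proof eventually_elim
      case (elim x)
      have "(\<lambda>n. max 0 (Zl x - Z n x)) \<longlonglongrightarrow> max 0 (Zl x - Zl x)"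
        by (intro tendsto_intros elim)
      then show ?case by (simp add: P_def)
    qed
    show "AE x in M. norm (P n x) \<le> Zl x" for n using nn[of n] nnl
      by eventually_elim (auto simp: P_def)
  qed (use Zli in auto)
  have Pi: "integrable M (P n)" for n
    by (rule Bochner_Integration.integrable_bound[OF Zli])
       (use nn[of n] nnl in \<open>auto simp: P_def elim!: eventually_mono\<close>)
  have eq: "(\<integral>x. \<bar>Z n x - Zl x\<bar> \<partial>M) = integral\<^sup>L M (Z n) - integral\<^sup>L M Zl + 2 * integral\<^sup>L M (P n)" for n
  proof -
    have "(\<integral>x. \<bar>Z n x - Zl x\<bar> \<partial>M) = (\<integral>x. (Z n x - Zl x) + 2 * P n x \<partial>M)"
      by (intro Bochner_Integration.integral_cong) (auto simp: P_def max_def abs_if)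
    also have "\<dots> = integral\<^sup>L M (Z n) - integral\<^sup>L M Zl + 2 * integral\<^sup>L M (P n)"
      using Zi Zli Pi by simp
    finally show ?thesis .
  qed
  have "(\<lambda>n. integral\<^sup>L M (Z n) - integral\<^sup>L M Zl + 2 * integral\<^sup>L M (P n)) \<longlonglongrightarrow>
        integral\<^sup>L M Zl - integral\<^sup>L M Zl + 2 * 0"
    using Plim by (intro tendsto_intros ilim) auto
  then show ?thesis unfolding eq by simp
qed

(* Convergence in probability, metrised by the truncated L^1 distance
   \<integral> min 1 |X n - Y|. *)
definition conv_in_prob :: "'a measure \<Rightarrow> (nat \<Rightarrow> 'a \<Rightarrow> real) \<Rightarrow> ('a \<Rightarrow> real) \<Rightarrow> bool" where
  "conv_in_prob M X Y \<longleftrightarrow> (\<lambda>n. \<integral>w. min 1 \<bar>X n w - Y w\<bar> \<partial>M) \<longlonglongrightarrow> 0"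

lemma (in finite_measure) integrable_min1_abs:
  fixes f :: "'a \<Rightarrow> real"
  assumes [measurable]: "f \<in> borel_measurable M"
  shows "integrable M (\<lambda>w. min 1 \<bar>f w\<bar>)"
  by (rule integrable_const_bound[where B=1]) auto

lemma (in finite_measure) conv_in_prob_add:
  assumes [measurable]: "\<And>n. X n \<in> borel_measurable M" "Y \<in> borel_measurable M"
    "\<And>n. X' n \<in> borel_measurable M" "Y' \<in> borel_measurable M"
    and "conv_in_prob M X Y" "conv_in_prob M X' Y'"
  shows "conv_in_prob M (\<lambda>n w. X n w + X' n w) (\<lambda>w. Y w + Y' w)"
  unfolding conv_in_prob_def
proof (rule tendsto_0_squeeze)
  show "(\<lambda>n. (\<integral>w. min 1 \<bar>X n w - Y w\<bar> \<partial>M) + (\<integral>w. min 1 \<bar>X' n w - Y' w\<bar> \<partial>M)) \<longlonglongrightarrow> 0"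
    using tendsto_add[OF assms(5,6)[unfolded conv_in_prob_def]] by simp
  show "(\<integral>w. min 1 \<bar>X n w + X' n w - (Y w + Y' w)\<bar> \<partial>M)
      \<le> (\<integral>w. min 1 \<bar>X n w - Y w\<bar> \<partial>M) + (\<integral>w. min 1 \<bar>X' n w - Y' w\<bar> \<partial>M)" for n
  proof -
    have "(\<integral>w. min 1 \<bar>X n w + X' n w - (Y w + Y' w)\<bar> \<partial>M)
      \<le> (\<integral>w. min 1 \<bar>X n w - Y w\<bar> + min 1 \<bar>X' n w - Y' w\<bar> \<partial>M)"
    proof (rule integral_mono)
      show "min 1 \<bar>X n w + X' n w - (Y w + Y' w)\<bar> \<le> min 1 \<bar>X n w - Y w\<bar> + min 1 \<bar>X' n w - Y' w\<bar>" for w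
        using min1_abs_add[of "X n w - Y w" "X' n w - Y' w"] by (simp add: algebra_simps)
    qed (auto intro!: integrable_min1_abs Bochner_Integration.integrable_add)
    also have "\<dots> = (\<integral>w. min 1 \<bar>X n w - Y w\<bar> \<partial>M) + (\<integral>w. min 1 \<bar>X' n w - Y' w\<bar> \<partial>M)"
      by (intro Bochner_Integration.integral_add integrable_min1_abs) measurable
    finally show ?thesis .
  qed
qed simp

lemma (in finite_measure) conv_in_prob_cmult:
  assumes [measurable]: "\<And>n. X n \<in> borel_measurable M" "Y \<in> borel_measurable M"
    and "conv_in_prob M X Y"
  shows "conv_in_prob M (\<lambda>n w. c * X n w) (\<lambda>w. c * Y w)"
  unfolding conv_in_prob_def
proof (rule tendsto_0_squeeze)
  show "(\<lambda>n. (1 + \<bar>c\<bar>) * (\<integral>w. min 1 \<bar>X n w - Y w\<bar> \<partial>M)) \<longlonglongrightarrow> 0"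
    using tendsto_mult[OF tendsto_const assms(3)[unfolded conv_in_prob_def], of "1 + \<bar>c\<bar>"] by simp
  show "(\<integral>w. min 1 \<bar>c * X n w - c * Y w\<bar> \<partial>M) \<le> (1 + \<bar>c\<bar>) * (\<integral>w. min 1 \<bar>X n w - Y w\<bar> \<partial>M)" for n
  proof -
    have "(\<integral>w. min 1 \<bar>c * X n w - c * Y w\<bar> \<partial>M) \<le> (\<integral>w. (1 + \<bar>c\<bar>) * min 1 \<bar>X n w - Y w\<bar> \<partial>M)"
    proof (rule integral_mono)
      show "min 1 \<bar>c * X n w - c * Y w\<bar> \<le> (1 + \<bar>c\<bar>) * min 1 \<bar>X n w - Y w\<bar>" for w
        using min1_abs_mult[of c "X n w - Y w"] by (simp add: right_diff_distrib)
    qed (auto intro!: integrable_min1_abs integrable_mult_right)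
    then show ?thesis by simp
  qed
qed simp

lemma (in finite_measure) conv_in_prob_AE_subseq:
  assumes [measurable]: "\<And>n. X n \<in> borel_measurable M" "Y \<in> borel_measurable M"
    "\<And>n. X' n \<in> borel_measurable M" "Y' \<in> borel_measurable M"
    and "conv_in_prob M X Y" "conv_in_prob M X' Y'"
  shows "\<exists>r::nat\<Rightarrow>nat. strict_mono r \<and>
    (AE w in M. (\<lambda>n. X (r n) w) \<longlonglongrightarrow> Y w \<and> (\<lambda>n. X' (r n) w) \<longlonglongrightarrow> Y' w)"
proof -
  define S where "S n w = min 1 \<bar>X n w - Y w\<bar> + min 1 \<bar>X' n w - Y' w\<bar>" for n w
  have Si: "integrable M (S n)" for n
    unfolding S_def by (intro Bochner_Integration.integrable_add integrable_min1_abs) measurable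
  have "(\<integral>w. norm (S n w) \<partial>M) = (\<integral>w. min 1 \<bar>X n w - Y w\<bar> \<partial>M) + (\<integral>w. min 1 \<bar>X' n w - Y' w\<bar> \<partial>M)" for n
    unfolding S_def by (simp, intro Bochner_Integration.integral_add integrable_min1_abs) measurable
  then have S_L1: "(\<lambda>n. \<integral>w. norm (S n w) \<partial>M) \<longlonglongrightarrow> 0"
    using tendsto_add[OF assms(5,6)[unfolded conv_in_prob_def]] by simp
  then obtain r :: "nat \<Rightarrow> nat" where r: "strict_mono r" and Sae: "AE w in M. (\<lambda>n. S (r n) w) \<longlonglongrightarrow> 0"
    using tendsto_L1_AE_subseq[OF Si S_L1] by blast
  have "AE w in M. (\<lambda>n. X (r n) w) \<longlonglongrightarrow> Y w \<and> (\<lambda>n. X' (r n) w) \<longlonglongrightarrow> Y' w"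
    using Sae
  proof eventually_elim
    case (elim w)
    have "(\<lambda>n. X (r n) w - Y w) \<longlonglongrightarrow> 0" "(\<lambda>n. X' (r n) w - Y' w) \<longlonglongrightarrow> 0"
      by (rule min1_abs_tendsto_0, rule tendsto_0_squeeze[OF elim], auto simp: S_def)+
    then show ?case by (simp add: LIM_zero_iff)
  qed
  then show ?thesis using r by blast
qed

definition image_density :: "'a measure \<Rightarrow> ('a \<Rightarrow> 'a) \<Rightarrow> ('a \<Rightarrow> real) \<Rightarrow> bool" where
  "image_density M V L \<longleftrightarrow> V \<in> measurable M M \<and> L \<in> borel_measurable M \<and> (\<forall>w. 0 \<le> L w) \<and>
     distr M M V = density M (\<lambda>w. ennreal (L w))"

lemma image_density_integrable_iff:
  assumes "image_density M V L" and [measurable]: "\<phi> \<in> borel_measurable M"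
  shows "integrable M (\<lambda>w. \<phi> (V w)) \<longleftrightarrow> integrable M (\<lambda>w. L w * \<phi> w)"
proof -
  have [measurable]: "V \<in> measurable M M" "L \<in> borel_measurable M"
    using assms(1) by (auto simp: image_density_def)
  have "integrable M (\<lambda>w. \<phi> (V w)) \<longleftrightarrow> integrable (distr M M V) \<phi>"
    by (rule integrable_distr_eq[symmetric]) measurable
  also have "\<dots> \<longleftrightarrow> integrable (density M (\<lambda>w. ennreal (L w))) \<phi>"
    using assms(1) by (simp add: image_density_def)
  also have "\<dots> \<longleftrightarrow> integrable M (\<lambda>w. L w *\<^sub>R \<phi> w)"
    using assms(1) by (intro integrable_density) (auto simp: image_density_def)
  finally show ?thesis by simp
qed

lemma image_density_integral:
  assumes "image_density M V L" and [measurable]: "\<phi> \<in> borel_measurable M"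
  shows "(\<integral>w. \<phi> (V w) \<partial>M) = (\<integral>w. L w * \<phi> w \<partial>M)"
proof -
  have [measurable]: "V \<in> measurable M M" "L \<in> borel_measurable M"
    using assms(1) by (auto simp: image_density_def)
  have "(\<integral>w. \<phi> (V w) \<partial>M) = integral\<^sup>L (distr M M V) \<phi>" by (simp add: integral_distr)
  also have "\<dots> = (\<integral>w. L w * \<phi> w \<partial>M)"
    using assms(1) by (simp add: image_density_def integral_density)
  finally show ?thesis .
qed

lemma (in prob_space) image_density_integrable:
  assumes "image_density M V L"
  shows "integrable M L"
  using image_density_integrable_iff[OF assms, of "\<lambda>_. 1"] by simp

lemma disjoint_family_tail_eventually:
  assumes "disjoint_family A"
  shows "eventually (\<lambda>N. x \<notin> (\<Union>i\<in>{N..}. A i)) sequentially"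
proof (cases "\<exists>j. x \<in> A j")
  case True
  then obtain j where j: "x \<in> A j" by blast
  have "x \<notin> (\<Union>i\<in>{N..}. A i)" if "Suc j \<le> N" for N
  proof
    assume "x \<in> (\<Union>i\<in>{N..}. A i)"
    then obtain i where "i \<ge> N" "x \<in> A i" by blast
    moreover have "A i \<inter> A j = {}" if "i \<ge> N"
      using assms that \<open>Suc j \<le> N\<close> by (intro disjoint_family_onD) auto
    ultimately show False using j by blast
  qed
  then show ?thesis by (rule eventually_mono[OF eventually_ge_at_top[of "Suc j"]])
qed auto

lemma indicator_disjoint_UN_split:
  fixes A :: "nat \<Rightarrow> 'a set"
  assumes "disjoint_family A"
  shows "\<bar>indicator (\<Union>i. A i) x - indicator (\<Union>i. A i) y\<bar>
      \<le> (\<Sum>i<N. \<bar>indicator (A i) x - indicator (A i) y\<bar>)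
         + indicator (\<Union>i\<in>{N..}. A i) x + (indicator (\<Union>i\<in>{N..}. A i) y :: real)"
proof -
  define T where "T = (\<Union>i\<in>{N..}. A i)"
  have dec: "indicator (\<Union>i. A i) z = (\<Sum>i<N. indicator (A i) z) + (indicator T z :: real)" for z
  proof -
    have "(\<Union>i. A i) = (\<Union>i\<in>{..<N}. A i) \<union> T"
    proof (intro equalityI subsetI)
      fix x assume "x \<in> (\<Union>i. A i)"
      then obtain i where "x \<in> A i" by blast
      then show "x \<in> (\<Union>i\<in>{..<N}. A i) \<union> T" unfolding T_def by (cases "i < N") (auto simp: not_less)
    qed (auto simp: T_def)
    moreover have "(\<Union>i\<in>{..<N}. A i) \<inter> T = {}"
    proof -
      have "A i \<inter> A j = {}" if "i < N" "N \<le> j" for i j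
        using assms that by (intro disjoint_family_onD) auto
      then show ?thesis unfolding T_def by fastforce
    qed
    moreover have "indicator (\<Union>i\<in>{..<N}. A i) z = (\<Sum>i<N. indicator (A i) z :: real)"
      using assms by (intro indicator_UN_disjoint) (auto simp: disjoint_family_on_def)
    ultimately show ?thesis by (simp add: indicator_disj_union)
  qed
  have "\<bar>indicator (\<Union>i. A i) x - indicator (\<Union>i. A i) y\<bar>
      = \<bar>(\<Sum>i<N. indicator (A i) x - indicator (A i) y) + (indicator T x - (indicator T y :: real))\<bar>"
    unfolding dec by (simp add: sum_subtractf)
  also have "\<dots> \<le> (\<Sum>i<N. \<bar>indicator (A i) x - indicator (A i) y\<bar>) + (indicator T x + (indicator T y :: real))"
    by (intro order_trans[OF abs_triangle_ineq] add_mono sum_abs) (simp split: split_indicator)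
  finally show ?thesis by (simp add: T_def)
qed

(* Then f \<circ> V n \<rightarrow> f \<circ> V in probability for every
   measurable f: first for sets in G, then by Dynkin's theorem for all measurable sets,
   then for simple functions and finally for arbitrary ones. *)
locale converging_images = prob_space \<mu> for \<mu> :: "'a measure" +
  fixes Vn :: "nat \<Rightarrow> 'a \<Rightarrow> 'a" and Vl :: "'a \<Rightarrow> 'a" and Ln :: "nat \<Rightarrow> 'a \<Rightarrow> real" and Ll :: "'a \<Rightarrow> real"
    and G :: "'a set set"
  assumes Vn_density: "\<And>n. image_density \<mu> (Vn n) (Ln n)"
    and Vl_density: "image_density \<mu> Vl Ll"
    and L1conv: "(\<lambda>n. \<integral>w. \<bar>Ln n w - Ll w\<bar> \<partial>\<mu>) \<longlonglongrightarrow> 0"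
    and G_Int_stable: "Int_stable G" and G_space: "G \<subseteq> Pow (space \<mu>)"
    and G_generates: "sigma_sets (space \<mu>) G = sets \<mu>"
    and G_eventually: "\<And>A. A \<in> G \<Longrightarrow> AE w in \<mu>. Vl w \<in> A \<longrightarrow> eventually (\<lambda>n. Vn n w \<in> A) sequentially"
begin

lemma measurable_images[measurable]:
  "Vn n \<in> measurable \<mu> \<mu>" "Vl \<in> measurable \<mu> \<mu>" "Ln n \<in> borel_measurable \<mu>" "Ll \<in> borel_measurable \<mu>"
  using Vn_density Vl_density by (auto simp: image_density_def)

lemma densities_nonneg: "0 \<le> Ln n w" "0 \<le> Ll w"
  using Vn_density Vl_density by (auto simp: image_density_def)

lemma densities_integrable: "integrable \<mu> (Ln n)" "integrable \<mu> Ll"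
  using image_density_integrable Vn_density Vl_density by auto

lemma density_gap:
  fixes \<phi> :: "'a \<Rightarrow> real"
  assumes [measurable]: "\<phi> \<in> borel_measurable \<mu>" and b: "\<And>w. \<bar>\<phi> w\<bar> \<le> 1"
  shows "\<bar>(\<integral>w. Ln n w * \<phi> w \<partial>\<mu>) - (\<integral>w. Ll w * \<phi> w \<partial>\<mu>)\<bar> \<le> (\<integral>w. \<bar>Ln n w - Ll w\<bar> \<partial>\<mu>)"
proof -
  have bnd: "\<bar>(Ln n w - Ll w) * \<phi> w\<bar> \<le> \<bar>Ln n w - Ll w\<bar>" for w
    using b[of w] by (simp add: abs_mult mult_left_le)
  have diff_int: "integrable \<mu> (\<lambda>w. \<bar>Ln n w - Ll w\<bar>)" using densities_integrable by auto
  have prod_int: "integrable \<mu> (\<lambda>w. (Ln n w - Ll w) * \<phi> w)"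
    by (rule Bochner_Integration.integrable_bound[OF diff_int]) (use bnd in auto)
  have int: "integrable \<mu> (\<lambda>w. Ln n w * \<phi> w)" "integrable \<mu> (\<lambda>w. Ll w * \<phi> w)"
    by (rule Bochner_Integration.integrable_bound[OF densities_integrable(1)[of n]]
        Bochner_Integration.integrable_bound[OF densities_integrable(2)];
        use b in \<open>auto simp: abs_mult densities_nonneg mult_left_le\<close>)+
  have "(\<integral>w. Ln n w * \<phi> w \<partial>\<mu>) - (\<integral>w. Ll w * \<phi> w \<partial>\<mu>) = (\<integral>w. (Ln n w - Ll w) * \<phi> w \<partial>\<mu>)"
    using int by (simp add: left_diff_distrib)
  also have "\<bar>\<dots>\<bar> \<le> (\<integral>w. \<bar>(Ln n w - Ll w) * \<phi> w\<bar> \<partial>\<mu>)"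
    using integral_norm_bound[of \<mu> "\<lambda>w. (Ln n w - Ll w) * \<phi> w"] by simp
  also have "\<dots> \<le> (\<integral>w. \<bar>Ln n w - Ll w\<bar> \<partial>\<mu>)"
    using prod_int diff_int bnd by (intro integral_mono) auto
  finally show ?thesis .
qed

lemma image_integral_gap:
  fixes \<phi> :: "'a \<Rightarrow> real"
  assumes [measurable]: "\<phi> \<in> borel_measurable \<mu>" and b: "\<And>w. \<bar>\<phi> w\<bar> \<le> 1"
  shows "\<bar>(\<integral>w. \<phi> (Vn n w) \<partial>\<mu>) - (\<integral>w. \<phi> (Vl w) \<partial>\<mu>)\<bar> \<le> (\<integral>w. \<bar>Ln n w - Ll w\<bar> \<partial>\<mu>)"
  using density_gap[OF assms]
  by (simp add: image_density_integral[OF Vn_density] image_density_integral[OF Vl_density])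

definition indicator_gap :: "nat \<Rightarrow> 'a set \<Rightarrow> real" where
  "indicator_gap n A = (\<integral>w. \<bar>indicator A (Vn n w) - indicator A (Vl w)\<bar> \<partial>\<mu>)"

lemma integrable_bounded_indicators:
  assumes "A \<in> sets \<mu>" "B \<in> sets \<mu>"
  shows "integrable \<mu> (\<lambda>w. indicator A (Vn n w) :: real)"
    and "integrable \<mu> (\<lambda>w. indicator A (Vl w) :: real)"
    and "integrable \<mu> (\<lambda>w. indicator A (Vn n w) * indicator B (Vl w) :: real)"
    and "integrable \<mu> (\<lambda>w. \<bar>indicator A (Vn n w) - indicator B (Vl w)\<bar> :: real)"
  using assms by (auto intro!: integrable_const_bound[where B=1] split: split_indicator)

(* Sets of the generator: |1_A(x) - 1_A(y)| = 1_A x + 1_A y - 2 1_A x 1_A y,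
   and both integrals of the right-hand side converge to the same limit. *)
lemma indicator_gap_generator:
  assumes A[measurable]: "A \<in> sets \<mu>"
    and ev: "AE w in \<mu>. Vl w \<in> A \<longrightarrow> eventually (\<lambda>n. Vn n w \<in> A) sequentially"
  shows "(\<lambda>n. indicator_gap n A) \<longlonglongrightarrow> 0"
proof -
  define b :: real where "b = (\<integral>w. indicator A (Vl w) \<partial>\<mu>)"
  note ind_int = integrable_bounded_indicators[OF A A]
  have a: "(\<lambda>n. \<integral>w. indicator A (Vn n w) \<partial>\<mu>) \<longlonglongrightarrow> b"
  proof -
    have "(\<lambda>n. \<bar>(\<integral>w. indicator A (Vn n w) \<partial>\<mu>) - b\<bar>) \<longlonglongrightarrow> 0"
      unfolding b_def by (rule tendsto_0_squeeze[OF L1conv]) (auto intro!: image_integral_gap)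
    then show ?thesis by (simp add: LIM_zero_iff tendsto_rabs_zero_iff)
  qed
  have c: "(\<lambda>n. \<integral>w. indicator A (Vn n w) * indicator A (Vl w) \<partial>\<mu>) \<longlonglongrightarrow> b"
    unfolding b_def
  proof (rule integral_dominated_convergence[where w="\<lambda>w. 1"])
    show "AE w in \<mu>. (\<lambda>n. indicator A (Vn n w) * indicator A (Vl w) :: real) \<longlonglongrightarrow> indicator A (Vl w)"
      using ev
    proof eventually_elim
      case (elim w)
      show ?case
      proof (cases "Vl w \<in> A")
        case True
        then have "eventually (\<lambda>n. (indicator A (Vl w) :: real) = indicator A (Vn n w) * indicator A (Vl w)) sequentially"
          using elim by (auto elim!: eventually_mono)
        from Lim_transform_eventually[OF tendsto_const this] show ?thesis .
      qed simp
    qed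
  qed (auto split: split_indicator)
  have "indicator_gap n A = (\<integral>w. indicator A (Vn n w) \<partial>\<mu>) + b - 2 * (\<integral>w. indicator A (Vn n w) * indicator A (Vl w) \<partial>\<mu>)" for n
  proof -
    have "indicator_gap n A = (\<integral>w. indicator A (Vn n w) + indicator A (Vl w) - 2 * (indicator A (Vn n w) * indicator A (Vl w)) \<partial>\<mu>)"
      unfolding indicator_gap_def by (intro Bochner_Integration.integral_cong refl) (simp add: indicator_def)
    then show ?thesis unfolding b_def using ind_int by simp
  qed
  moreover have "(\<lambda>n. (\<integral>w. indicator A (Vn n w) \<partial>\<mu>) + b - 2 * (\<integral>w. indicator A (Vn n w) * indicator A (Vl w) \<partial>\<mu>)) \<longlonglongrightarrow> b + b - 2 * b"
    by (intro tendsto_intros a c)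
  ultimately show ?thesis by simp
qed

lemma indicator_gap_compl: "A \<in> sets \<mu> \<Longrightarrow> indicator_gap n (space \<mu> - A) = indicator_gap n A"
  unfolding indicator_gap_def using measurable_space[OF measurable_images(1)] measurable_space[OF measurable_images(2)]
  by (intro Bochner_Integration.integral_cong refl) (auto simp: indicator_def)

lemma tail_mass_tendsto_0:
  fixes A :: "nat \<Rightarrow> 'a set"
  assumes [measurable]: "\<And>i. A i \<in> sets \<mu>" and "disjoint_family A"
  shows "(\<lambda>N. \<integral>w. Ll w * indicator (\<Union>i\<in>{N..}. A i) w \<partial>\<mu>) \<longlonglongrightarrow> 0"
proof -
  have "(\<lambda>N. \<integral>w. Ll w * indicator (\<Union>i\<in>{N..}. A i) w \<partial>\<mu>) \<longlonglongrightarrow> (\<integral>w. 0 \<partial>\<mu>)"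
  proof (rule integral_dominated_convergence[where w="Ll"])
    show "AE w in \<mu>. (\<lambda>N. Ll w * indicator (\<Union>i\<in>{N..}. A i) w) \<longlonglongrightarrow> 0"
    proof (intro AE_I2)
      fix w
      have "eventually (\<lambda>N. (0::real) = Ll w * indicator (\<Union>i\<in>{N..}. A i) w) sequentially"
        using disjoint_family_tail_eventually[OF assms(2), of w] by eventually_elim simp
      from Lim_transform_eventually[OF tendsto_const this]
      show "(\<lambda>N. Ll w * indicator (\<Union>i\<in>{N..}. A i) w) \<longlonglongrightarrow> 0" .
    qed
  qed (auto simp: densities_nonneg densities_integrable split: split_indicator)
  then show ?thesis by simp
qed

lemma indicator_gap_UN_bound:
  fixes A :: "nat \<Rightarrow> 'a set"
  assumes [measurable]: "\<And>i. A i \<in> sets \<mu>" and disj: "disjoint_family A"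
  shows "indicator_gap n (\<Union>i. A i) \<le> (\<Sum>i<N. indicator_gap n (A i))
      + 2 * (\<integral>w. Ll w * indicator (\<Union>i\<in>{N..}. A i) w \<partial>\<mu>) + (\<integral>w. \<bar>Ln n w - Ll w\<bar> \<partial>\<mu>)"
proof -
  define T where "T = (\<Union>i\<in>{N..}. A i)"
  have [measurable]: "T \<in> sets \<mu>" unfolding T_def by (auto intro: sets.countable_UN)
  note iA = integrable_bounded_indicators(4)[OF assms(1) assms(1)]
  note iT = integrable_bounded_indicators(1,2)[of T T]
  have "indicator_gap n (\<Union>i. A i) \<le> (\<integral>w. (\<Sum>i<N. \<bar>indicator (A i) (Vn n w) - indicator (A i) (Vl w)\<bar>)
       + indicator T (Vn n w) + indicator T (Vl w) \<partial>\<mu>)"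
    unfolding indicator_gap_def T_def
    by (intro integral_mono indicator_disjoint_UN_split[OF disj] integrable_bounded_indicators
        Bochner_Integration.integrable_add Bochner_Integration.integrable_sum iA iT[unfolded T_def]) auto
  also have "\<dots> = (\<Sum>i<N. indicator_gap n (A i)) + (\<integral>w. indicator T (Vn n w) \<partial>\<mu>) + (\<integral>w. indicator T (Vl w) \<partial>\<mu>)"
    unfolding indicator_gap_def using iA iT by (simp add: Bochner_Integration.integrable_sum)
  also have "(\<integral>w. indicator T (Vn n w) \<partial>\<mu>) \<le> (\<integral>w. indicator T (Vl w) \<partial>\<mu>) + (\<integral>w. \<bar>Ln n w - Ll w\<bar> \<partial>\<mu>)"
    using image_integral_gap[of "indicator T" n] by (auto split: split_indicator)
  also have "(\<integral>w. indicator T (Vl w) \<partial>\<mu>) = (\<integral>w. Ll w * indicator T w \<partial>\<mu>)"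
    by (rule image_density_integral[OF Vl_density]) measurable
  finally show ?thesis by (simp add: T_def)
qed

lemma indicator_gap_UN:
  fixes A :: "nat \<Rightarrow> 'a set"
  assumes [measurable]: "\<And>i. A i \<in> sets \<mu>" and disj: "disjoint_family A"
    and lim: "\<And>i. (\<lambda>n. indicator_gap n (A i)) \<longlonglongrightarrow> 0"
  shows "(\<lambda>n. indicator_gap n (\<Union>i. A i)) \<longlonglongrightarrow> 0"
proof (rule tendsto_0_by_eps)
  fix e :: real assume e: "0 < e"
  obtain N where tail: "(\<integral>w. Ll w * indicator (\<Union>i\<in>{N..}. A i) w \<partial>\<mu>) < e / 4"
    using order_tendstoD(2)[OF tail_mass_tendsto_0[OF assms(1,2)], of "e / 4"] e
    by (auto dest: eventually_happens)
  have "(\<lambda>n. \<Sum>i<N. indicator_gap n (A i)) \<longlonglongrightarrow> (\<Sum>i<N. 0)" by (intro tendsto_sum lim)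
  then have ev1: "eventually (\<lambda>n. (\<Sum>i<N. indicator_gap n (A i)) < e / 4) sequentially"
    using e by (intro order_tendstoD) auto
  have ev2: "eventually (\<lambda>n. (\<integral>w. \<bar>Ln n w - Ll w\<bar> \<partial>\<mu>) < e / 4) sequentially"
    using L1conv e by (intro order_tendstoD) auto
  show "eventually (\<lambda>n. indicator_gap n (\<Union>i. A i) \<le> e) sequentially"
    using ev1 ev2
  proof eventually_elim
    case (elim n)
    then show ?case using indicator_gap_UN_bound[OF assms(1,2), where n=n and N=N] tail by linarith
  qed
qed (simp add: indicator_gap_def)

(* Dynkin's theorem extends the generator case to all measurable sets. *)
lemma indicator_gap_tendsto_0:
  assumes "A \<in> sets \<mu>"
  shows "(\<lambda>n. indicator_gap n A) \<longlonglongrightarrow> 0"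
proof -
  from assms have "A \<in> sigma_sets (space \<mu>) G" by (simp add: G_generates)
  with G_Int_stable G_space show ?thesis
  proof (induct rule: sigma_sets_induct_disjoint)
    case (basic A)
    then have "A \<in> sets \<mu>" using G_generates sigma_sets.Basic[of A G "space \<mu>"] by simp
    then show ?case using G_eventually[OF basic] by (rule indicator_gap_generator)
  next
    case empty then show ?case by (simp add: indicator_gap_def)
  next
    case (compl A)
    then show ?case using G_generates by (simp add: indicator_gap_compl)
  next
    case (union A)
    then show ?case using G_generates by (intro indicator_gap_UN) auto
  qed
qed

abbreviation images_conv :: "('a \<Rightarrow> real) \<Rightarrow> bool" where
  "images_conv f \<equiv> conv_in_prob \<mu> (\<lambda>n w. f (Vn n w)) (\<lambda>w. f (Vl w))"

lemma images_conv_indicator: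
  assumes "A \<in> sets \<mu>"
  shows "images_conv (indicator A)"
proof -
  have "min 1 \<bar>indicator A x - indicator A y\<bar> = (\<bar>indicator A x - indicator A y\<bar> :: real)" for x y
    by (simp split: split_indicator)
  then show ?thesis using indicator_gap_tendsto_0[OF assms] by (simp add: conv_in_prob_def indicator_gap_def)
qed

lemma images_conv_cong:
  assumes "\<And>x. x \<in> space \<mu> \<Longrightarrow> f x = g x" "images_conv f"
  shows "images_conv g"
proof -
  have "(\<integral>w. min 1 \<bar>f (Vn n w) - f (Vl w)\<bar> \<partial>\<mu>) = (\<integral>w. min 1 \<bar>g (Vn n w) - g (Vl w)\<bar> \<partial>\<mu>)" for n
    using assms(1) measurable_space[OF measurable_images(1)] measurable_space[OF measurable_images(2)]
    by (intro Bochner_Integration.integral_cong) auto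
  then show ?thesis using assms(2) by (simp add: conv_in_prob_def)
qed

lemma images_conv_simple:
  assumes "simple_function \<mu> s"
  shows "images_conv s"
proof -
  have lincomb: "images_conv (\<lambda>x. \<Sum>y\<in>S. indicator (A y) x *\<^sub>R c y)"
    if "finite S" "\<And>y. y \<in> S \<Longrightarrow> A y \<in> sets \<mu>" for S A and c :: "real \<Rightarrow> real"
    using that
  proof (induction S rule: finite_induct)
    case empty then show ?case by (simp add: conv_in_prob_def)
  next
    case (insert y S)
    then have [measurable]: "A z \<in> sets \<mu>" if "z \<in> insert y S" for z using that by auto
    have m: "(\<lambda>w. \<Sum>z\<in>S. indicator (A z) (V w) *\<^sub>R c z) \<in> borel_measurable \<mu>"
      if [measurable]: "V \<in> measurable \<mu> \<mu>" for V
      using insert by (intro borel_measurable_sum) auto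
    have "images_conv (\<lambda>x. c y * indicator (A y) x)"
      by (rule conv_in_prob_cmult[OF _ _ images_conv_indicator]) measurable
    moreover have "images_conv (\<lambda>x. \<Sum>z\<in>S. indicator (A z) x *\<^sub>R c z)" using insert by simp
    ultimately have "images_conv (\<lambda>x. c y * indicator (A y) x + (\<Sum>z\<in>S. indicator (A z) x *\<^sub>R c z))"
    proof (rule conv_in_prob_add[rotated 4])
      show "(\<lambda>w. \<Sum>z\<in>S. indicator (A z) (Vn n w) *\<^sub>R c z) \<in> borel_measurable \<mu>" for n by (rule m) measurable
      show "(\<lambda>w. \<Sum>z\<in>S. indicator (A z) (Vl w) *\<^sub>R c z) \<in> borel_measurable \<mu>" by (rule m) measurable
    qed measurable
    moreover have "(\<Sum>z\<in>insert y S. indicator (A z) x *\<^sub>R c z)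
        = c y * indicator (A y) x + (\<Sum>z\<in>S. indicator (A z) x *\<^sub>R c z)" for x
      by (simp only: sum.insert[OF insert.hyps] real_scaleR_def mult.commute)
    ultimately show ?case by (simp only:)
  qed
  show ?thesis
  proof (rule images_conv_cong)
    show "images_conv (\<lambda>x. \<Sum>y\<in>s ` space \<mu>. indicator (s -` {y} \<inter> space \<mu>) x *\<^sub>R y)"
      by (rule lincomb) (use assms in \<open>auto simp: simple_function_def\<close>)
    show "(\<Sum>y\<in>s ` space \<mu>. indicator (s -` {y} \<inter> space \<mu>) x *\<^sub>R y) = s x" if "x \<in> space \<mu>" for x
      by (rule simple_function_indicator_representation_banach[OF assms that, symmetric])
  qed
qed

lemma images_conv_approx_bound:
  fixes f s :: "'a \<Rightarrow> real"
  assumes [measurable]: "f \<in> borel_measurable \<mu>" "s \<in> borel_measurable \<mu>"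
  shows "(\<integral>w. min 1 \<bar>f (Vn n w) - f (Vl w)\<bar> \<partial>\<mu>) \<le> 2 * (\<integral>w. Ll w * min 1 \<bar>f w - s w\<bar> \<partial>\<mu>)
      + (\<integral>w. \<bar>Ln n w - Ll w\<bar> \<partial>\<mu>) + (\<integral>w. min 1 \<bar>s (Vn n w) - s (Vl w)\<bar> \<partial>\<mu>)"
proof -
  have i1: "integrable \<mu> (\<lambda>w. min 1 \<bar>f (Vn n w) - s (Vn n w)\<bar>)"
    and i2: "integrable \<mu> (\<lambda>w. min 1 \<bar>s (Vn n w) - s (Vl w)\<bar>)"
    and i3: "integrable \<mu> (\<lambda>w. min 1 \<bar>s (Vl w) - f (Vl w)\<bar>)"
    by (auto intro!: integrable_min1_abs)
  have "(\<integral>w. min 1 \<bar>f (Vn n w) - f (Vl w)\<bar> \<partial>\<mu>) \<le>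
      (\<integral>w. min 1 \<bar>f (Vn n w) - s (Vn n w)\<bar> + min 1 \<bar>s (Vn n w) - s (Vl w)\<bar> + min 1 \<bar>s (Vl w) - f (Vl w)\<bar> \<partial>\<mu>)"
  proof (rule integral_mono)
    fix w
    show "min 1 \<bar>f (Vn n w) - f (Vl w)\<bar> \<le> min 1 \<bar>f (Vn n w) - s (Vn n w)\<bar> + min 1 \<bar>s (Vn n w) - s (Vl w)\<bar> + min 1 \<bar>s (Vl w) - f (Vl w)\<bar>"
      using min1_abs_add[of "f (Vn n w) - s (Vn n w)" "s (Vn n w) - f (Vl w)"]
        min1_abs_add[of "s (Vn n w) - s (Vl w)" "s (Vl w) - f (Vl w)"] by simp
  qed (auto intro!: integrable_min1_abs Bochner_Integration.integrable_add i1 i2 i3)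
  also have "\<dots> = (\<integral>w. min 1 \<bar>f (Vn n w) - s (Vn n w)\<bar> \<partial>\<mu>) + (\<integral>w. min 1 \<bar>s (Vn n w) - s (Vl w)\<bar> \<partial>\<mu>)
      + (\<integral>w. min 1 \<bar>s (Vl w) - f (Vl w)\<bar> \<partial>\<mu>)"
    using i1 i2 i3 by simp
  also have "(\<integral>w. min 1 \<bar>f (Vn n w) - s (Vn n w)\<bar> \<partial>\<mu>) = (\<integral>w. Ln n w * min 1 \<bar>f w - s w\<bar> \<partial>\<mu>)"
    by (rule image_density_integral[OF Vn_density]) measurable
  also have "\<dots> \<le> (\<integral>w. Ll w * min 1 \<bar>f w - s w\<bar> \<partial>\<mu>) + (\<integral>w. \<bar>Ln n w - Ll w\<bar> \<partial>\<mu>)"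
    using density_gap[of "\<lambda>w. min 1 \<bar>f w - s w\<bar>" n] by simp
  also have "(\<integral>w. min 1 \<bar>s (Vl w) - f (Vl w)\<bar> \<partial>\<mu>) = (\<integral>w. Ll w * min 1 \<bar>f w - s w\<bar> \<partial>\<mu>)"
    by (subst image_density_integral[OF Vl_density]) (simp_all add: abs_minus_commute)
  finally show ?thesis by simp
qed

(* Arbitrary measurable f, approximated pointwise by simple functions; the approximation
   error is uniformly small in n because the densities converge in L^1. *)
theorem images_conv_measurable:
  fixes f :: "'a \<Rightarrow> real"
  assumes f[measurable]: "f \<in> borel_measurable \<mu>"
  shows "images_conv f"
proof -
  obtain s where s: "\<And>i. simple_function \<mu> (s i)" and slim: "\<And>x. x \<in> space \<mu> \<Longrightarrow> (\<lambda>i. s i x) \<longlonglongrightarrow> f x"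
    using borel_measurable_implies_sequence_metric[OF f, of 0] by blast
  have [measurable]: "s i \<in> borel_measurable \<mu>" for i by (rule borel_measurable_simple_function[OF s])
  define e where "e m = (\<integral>w. Ll w * min 1 \<bar>f w - s m w\<bar> \<partial>\<mu>)" for m
  have "e \<longlonglongrightarrow> (\<integral>w. 0 \<partial>\<mu>)" unfolding e_def
  proof (rule integral_dominated_convergence[where w="Ll"])
    show "AE w in \<mu>. (\<lambda>m. Ll w * min 1 \<bar>f w - s m w\<bar>) \<longlonglongrightarrow> 0"
    proof (rule AE_I2)
      fix w assume w: "w \<in> space \<mu>"
      have "(\<lambda>m. Ll w * min 1 \<bar>f w - s m w\<bar>) \<longlonglongrightarrow> Ll w * min 1 \<bar>f w - f w\<bar>"
        by (intro tendsto_intros slim[OF w])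
      then show "(\<lambda>m. Ll w * min 1 \<bar>f w - s m w\<bar>) \<longlonglongrightarrow> 0" by simp
    qed
  qed (auto simp: densities_integrable abs_mult densities_nonneg mult_left_le)
  then have elim: "e \<longlonglongrightarrow> 0" by simp
  show ?thesis unfolding conv_in_prob_def
  proof (rule tendsto_0_by_eps)
    fix eps :: real assume eps: "0 < eps"
    obtain m where em: "e m < eps / 4"
      using order_tendstoD(2)[OF elim, of "eps / 4"] eps by (auto dest: eventually_happens)
    have ev1: "eventually (\<lambda>n. (\<integral>w. min 1 \<bar>s m (Vn n w) - s m (Vl w)\<bar> \<partial>\<mu>) < eps / 4) sequentially"
      using images_conv_simple[OF s[of m]] eps unfolding conv_in_prob_def by (intro order_tendstoD) auto
    have ev2: "eventually (\<lambda>n. (\<integral>w. \<bar>Ln n w - Ll w\<bar> \<partial>\<mu>) < eps / 4) sequentially"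
      using L1conv eps by (intro order_tendstoD) auto
    show "eventually (\<lambda>n. (\<integral>w. min 1 \<bar>f (Vn n w) - f (Vl w)\<bar> \<partial>\<mu>) \<le> eps) sequentially"
      using ev1 ev2
    proof eventually_elim
      case (elim n)
      then show ?case using images_conv_approx_bound[OF f borel_measurable_simple_function[OF s[of m]], of n] em unfolding e_def by linarith
    qed
  qed simp
qed

end

lemma tendsto_coordinatewise:
  fixes X :: "nat \<Rightarrow> (nat \<Rightarrow> 'b::topological_space)"
  assumes "\<And>i. (\<lambda>n. X n i) \<longlonglongrightarrow> x i"
  shows "X \<longlonglongrightarrow> x"
proof -
  have "limitin (product_topology (\<lambda>i. euclidean) UNIV) X x sequentially"
    using assms by (simp add: limitin_componentwise)
  then show ?thesis by (simp add: euclidean_product_topology)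
qed

lemma space_filt: "space (filt s) = path_carrier"
  unfolding filt_def by (rule space_measure_of) auto

lemma sets_filt: "sets (filt s) = sigma_sets path_carrier
     {{w \<in> path_carrier. w r \<in> A} | r A. r \<in> {0..s} \<and> A \<in> sets borel}"
  unfolding filt_def by (rule sets_measure_of) auto

(* Each coordinate w \<mapsto> w t is measurable (trivially so outside [0,1], where w t = 0). *)
lemma coordinate_measurable: "(\<lambda>w. w t) \<in> borel_measurable (filt 1)"
proof (cases "t \<in> {0..1}")
  case True
  show ?thesis
  proof (rule borel_measurableI)
    fix S :: "(real^'d) set" assume "open S"
    have "{w \<in> path_carrier. w t \<in> S} \<in> {{w \<in> path_carrier. w r \<in> A} | r A. r \<in> {0..1} \<and> A \<in> sets borel}"
      by (rule CollectI, rule exI[of _ t], rule exI[of _ S]) (use True \<open>open S\<close> in auto)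
    then have "{w \<in> path_carrier. w t \<in> S} \<in> sets (filt 1)"
      unfolding sets_filt by (rule sigma_sets.Basic)
    moreover have "(\<lambda>w. w t) -` S \<inter> space (filt 1) = {w \<in> path_carrier. w t \<in> S}"
      by (auto simp: space_filt)
    ultimately show "(\<lambda>w. w t) -` S \<inter> space (filt 1) \<in> sets (filt 1)" by simp
  qed
next
  case False
  have "(\<lambda>w. 0::real^'a) \<in> borel_measurable (filt 1)" by simp
  then show ?thesis
    by (rule measurable_cong[THEN iffD1, rotated]) (use False in \<open>auto simp: space_filt path_carrier_def\<close>)
qed

lemma coordinate_sequence_measurable: "(\<lambda>w i. w (r i)) \<in> measurable (filt 1) (borel :: (nat \<Rightarrow> real^'d) measure)"
proof -
  have "(\<lambda>w i. w (r i)) \<in> measurable (filt 1) (Pi\<^sub>M UNIV (\<lambda>i. borel :: (real^'d) measure))"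
    by (rule measurable_PiM_single') (auto intro: coordinate_measurable)
  then show ?thesis using measurable_cong_sets[OF refl sets_PiM_equal_borel] by blast
qed

(* They form an intersection-stable generator of the \<sigma>-algebra, and a sequence of paths
   converging pointwise eventually enters every cylinder set containing its limit. *)
definition cylinders :: "'d::finite path set set" where
  "cylinders = {{w \<in> path_carrier. (\<lambda>i. w (r i)) \<in> B} | (r :: nat \<Rightarrow> real) (B :: (nat \<Rightarrow> real^'d) set). open B}"

lemma cylinders_subset: "(cylinders :: 'd::finite path set set) \<subseteq> Pow path_carrier" unfolding cylinders_def by auto

lemma cylinders_measurable: "(cylinders :: 'd::finite path set set) \<subseteq> sets (filt 1)"
proof
  fix A :: "'d path set" assume "A \<in> cylinders"
  then obtain r and B :: "(nat \<Rightarrow> real^'d) set" where A: "A = {w \<in> path_carrier. (\<lambda>i. w (r i)) \<in> B}" "open B"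
    unfolding cylinders_def by blast
  have "(\<lambda>w i. w (r i)) -` B \<inter> space (filt 1) \<in> sets (filt 1)"
    by (rule measurable_sets[OF coordinate_sequence_measurable]) (use A(2) in auto)
  moreover have "(\<lambda>w i. w (r i)) -` B \<inter> space (filt 1) = A" by (auto simp: A space_filt)
  ultimately show "A \<in> sets (filt 1)" by simp
qed

lemma open_reindex_preimage: "open B \<Longrightarrow> open {x :: nat \<Rightarrow> 'b::topological_space. (\<lambda>i. x (f i)) \<in> B}"
proof -
  assume "open B"
  have c: "continuous_on UNIV (\<lambda>x :: nat \<Rightarrow> 'b. (\<lambda>i. x (f i)))"
    by (intro continuous_on_coordinatewise_then_product continuous_on_product_coordinates)
  have "open ((\<lambda>x :: nat \<Rightarrow> 'b. (\<lambda>i. x (f i))) -` B)"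
    by (rule open_vimage[OF \<open>open B\<close> c])
  then show ?thesis by (simp add: vimage_def)
qed

lemma open_coordinate_preimage: "open S \<Longrightarrow> open {x :: nat \<Rightarrow> 'b::topological_space. x j \<in> S}"
proof -
  assume "open S"
  have c: "continuous_on UNIV (\<lambda>x :: nat \<Rightarrow> 'b. x j)" by (rule continuous_on_product_coordinates)
  have "open ((\<lambda>x :: nat \<Rightarrow> 'b. x j) -` S)" by (rule open_vimage[OF \<open>open S\<close> c])
  then show ?thesis by (simp add: vimage_def)
qed

(* Two cylinder sets intersect in a cylinder set over the interleaved coordinates. *)
lemma cylinders_Int_stable: "Int_stable (cylinders :: 'd::finite path set set)"
proof (rule Int_stableI)
  fix A1 A2 :: "'d path set" assume "A1 \<in> cylinders" "A2 \<in> cylinders"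
  then obtain r1 r2 and B1 B2 :: "(nat \<Rightarrow> real^'d) set" where
    A: "A1 = {w \<in> path_carrier. (\<lambda>i. w (r1 i)) \<in> B1}" "open B1"
       "A2 = {w \<in> path_carrier. (\<lambda>i. w (r2 i)) \<in> B2}" "open B2"
    unfolding cylinders_def by blast
  define r where "r i = (if even i then r1 (i div 2) else r2 (i div 2))" for i
  define B where "B = {x :: nat \<Rightarrow> real^'d. (\<lambda>i. x (2 * i)) \<in> B1} \<inter> {x. (\<lambda>i. x (2 * i + 1)) \<in> B2}"
  have "open B" unfolding B_def by (intro open_Int open_reindex_preimage A)
  have e1: "(\<lambda>i. w (r (2 * i))) = (\<lambda>i. w (r1 i))" for w :: "'d path" by (simp add: r_def)
  have e2: "(\<lambda>i. w (r (2 * i + 1))) = (\<lambda>i. w (r2 i))" for w :: "'d path" by (simp add: r_def)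
  have "A1 \<inter> A2 = {w \<in> path_carrier. (\<lambda>i. w (r i)) \<in> B}"
    unfolding A B_def using e1 e2 by auto
  then show "A1 \<inter> A2 \<in> cylinders" unfolding cylinders_def using \<open>open B\<close> by blast
qed

(* The cylinder sets generate the \<sigma>-algebra of W, since each coordinate is a cylinder map. *)
lemma cylinders_generate: "sigma_sets path_carrier (cylinders :: 'd::finite path set set) = sets (filt 1)"
proof (rule antisym)
  show "sigma_sets path_carrier cylinders \<subseteq> sets (filt 1)"
    using cylinders_measurable by (metis sets.sigma_sets_subset space_filt)
  show "sets (filt 1) \<subseteq> sigma_sets path_carrier (cylinders :: 'd::finite path set set)"
    unfolding sets_filt
  proof (rule sigma_sets_mono, rule subsetI)
    fix X :: "'d path set" assume "X \<in> {{w \<in> path_carrier. w r \<in> A} | r A. r \<in> {0..1} \<and> A \<in> sets borel}"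
    then obtain r and A :: "(real^'d) set" where X: "X = {w \<in> path_carrier. w r \<in> A}" "A \<in> sets borel" by blast
    let ?M = "sigma path_carrier (cylinders :: 'd path set set)"
    have sp: "space ?M = path_carrier" by (rule space_measure_of[OF cylinders_subset])
    have ss: "sets ?M = sigma_sets path_carrier cylinders" by (rule sets_measure_of[OF cylinders_subset])
    have "(\<lambda>w. w r) \<in> borel_measurable ?M"
    proof (rule borel_measurableI)
      fix S :: "(real^'d) set" assume "open S"
      have "{w \<in> path_carrier. (\<lambda>i. w ((\<lambda>_. r) i)) \<in> {x :: nat \<Rightarrow> real^'d. x 0 \<in> S}} \<in> cylinders"
        unfolding cylinders_def by (rule CollectI, rule exI[of _ "\<lambda>_. r"], rule exI[of _ "{x :: nat \<Rightarrow> real^'d. x 0 \<in> S}"]) (use open_coordinate_preimage[OF \<open>open S\<close>, of 0] in simp)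
      then have "{w \<in> path_carrier. w r \<in> S} \<in> sets ?M" unfolding ss by auto
      moreover have "(\<lambda>w. w r) -` S \<inter> space ?M = {w \<in> path_carrier. w r \<in> S}" by (auto simp: sp)
      ultimately show "(\<lambda>w. w r) -` S \<inter> space ?M \<in> sets ?M" by simp
    qed
    then have "(\<lambda>w. w r) -` A \<inter> space ?M \<in> sets ?M" using X(2) by (rule measurable_sets)
    moreover have "(\<lambda>w. w r) -` A \<inter> space ?M = X" by (auto simp: sp X)
    ultimately show "X \<in> sigma_sets path_carrier cylinders" by (simp add: ss)
  qed
qed

lemma cylinders_eventually:
  fixes X :: "nat \<Rightarrow> 'd::finite path" and x :: "'d path"
  assumes A: "A \<in> cylinders" and lim: "\<forall>t. (\<lambda>n. X n t) \<longlonglongrightarrow> x t"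
    and X: "\<And>n. X n \<in> path_carrier" and "x \<in> A"
  shows "eventually (\<lambda>n. X n \<in> A) sequentially"
proof -
  obtain r and B :: "(nat \<Rightarrow> real^'d) set" where AB: "A = {w \<in> path_carrier. (\<lambda>i. w (r i)) \<in> B}" "open B"
    using A unfolding cylinders_def by blast
  have "(\<lambda>n. (\<lambda>i. X n (r i))) \<longlonglongrightarrow> (\<lambda>i. x (r i))"
    by (rule tendsto_coordinatewise) (use lim in auto)
  moreover have "(\<lambda>i. x (r i)) \<in> B" using assms(4) AB by auto
  ultimately have "eventually (\<lambda>n. (\<lambda>i. X n (r i)) \<in> B) sequentially"
    using topological_tendstoD AB(2) by blast
  then show ?thesis by eventually_elim (use X AB in auto)
qed

abbreviation unit_time :: "real measure" where
  "unit_time \<equiv> restrict_space lborel {0..1}"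

lemma finite_measure_unit_time: "finite_measure unit_time"
  by (rule finite_measureI) (simp add: emeasure_restrict_space space_restrict_space)

lemma unit_time_integrable_iff: "integrable unit_time g \<longleftrightarrow> set_integrable lborel {0..1} g"
  for g :: "real \<Rightarrow> 'b::{banach, second_countable_topology}"
  by (simp add: integrable_restrict_space set_integrable_def)

lemma unit_time_integral: "integral\<^sup>L unit_time g = (LINT s:{0..1}|lborel. g s)"
  for g :: "real \<Rightarrow> 'b::{banach, second_countable_topology}"
  by (simp add: integral_restrict_space set_lebesgue_integral_def)

lemma norm_diff_squared_le: "(norm (a - b))\<^sup>2 \<le> 2 * (norm a)\<^sup>2 + 2 * (norm (b :: 'b::real_normed_vector))\<^sup>2"
proof -
  have "(norm (a - b))\<^sup>2 \<le> (norm a + norm b)\<^sup>2"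
    using norm_triangle_ineq4[of a b] by (intro power_mono) auto
  also have "\<dots> \<le> 2 * (norm a)\<^sup>2 + 2 * (norm b)\<^sup>2"
    using sum_squares_bound[of "norm a" "norm b"] by (simp add: power2_eq_square algebra_simps)
  finally show ?thesis .
qed

lemma integrable_norm_diff_squared:
  fixes f g :: "'a \<Rightarrow> 'b::{banach, second_countable_topology}"
  assumes [measurable]: "f \<in> borel_measurable M" "g \<in> borel_measurable M"
    and "integrable M (\<lambda>x. (norm (f x))\<^sup>2)" "integrable M (\<lambda>x. (norm (g x))\<^sup>2)"
  shows "integrable M (\<lambda>x. (norm (f x - g x))\<^sup>2)"
  by (rule Bochner_Integration.integrable_bound[of _ "\<lambda>x. 2 * (norm (f x))\<^sup>2 + 2 * (norm (g x))\<^sup>2"])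
     (use assms(3,4) norm_diff_squared_le in auto)

lemma sq_int_process_lincomb:
  assumes u: "sq_int_process \<mu> u" and v: "sq_int_process \<mu> v"
  shows "sq_int_process \<mu> (\<lambda>s w. a *\<^sub>R u s w - b *\<^sub>R v s w)"
proof -
  have [measurable]: "(\<lambda>x. u (fst x) (snd x)) \<in> borel_measurable (time_path \<mu>)"
    "(\<lambda>x. v (fst x) (snd x)) \<in> borel_measurable (time_path \<mu>)"
    using u v by (auto simp: sq_int_process_def case_prod_beta')
  have i: "integrable (time_path \<mu>) (\<lambda>x. 2 * a\<^sup>2 * (norm (u (fst x) (snd x)))\<^sup>2 + 2 * b\<^sup>2 * (norm (v (fst x) (snd x)))\<^sup>2)"
    using u v by (intro Bochner_Integration.integrable_add integrable_mult_right)
      (auto simp: sq_int_process_def case_prod_beta')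
  have bnd: "(norm (a *\<^sub>R x - b *\<^sub>R y))\<^sup>2 \<le> 2 * a\<^sup>2 * (norm x)\<^sup>2 + 2 * b\<^sup>2 * (norm y)\<^sup>2" for x y :: "real^'d"
    using norm_diff_squared_le[of "a *\<^sub>R x" "b *\<^sub>R y"] by (simp add: power_mult_distrib)
  have "integrable (time_path \<mu>) (\<lambda>x. (norm (a *\<^sub>R u (fst x) (snd x) - b *\<^sub>R v (fst x) (snd x)))\<^sup>2)"
    by (rule Bochner_Integration.integrable_bound[OF i]) (use bnd in auto)
  then show ?thesis unfolding sq_int_process_def by (simp add: case_prod_beta')
qed

lemma sq_int_process_diff_integrable:
  assumes "sq_int_process \<mu> u" "sq_int_process \<mu> v"
  shows "integrable (time_path \<mu>) (\<lambda>(s, w). (norm (u s w - v s w))\<^sup>2)"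
  using sq_int_process_lincomb[OF assms, of 1 1] by (simp add: sq_int_process_def)

lemma sq_int_process_section_measurable:
  assumes "sq_int_process \<mu> v" "w \<in> space \<mu>"
  shows "(\<lambda>s. v s w) \<in> borel_measurable unit_time"
  using measurable_compose[OF measurable_Pair2'[OF assms(2)], of "\<lambda>(s, w). v s w"] assms(1)
  by (simp add: sq_int_process_def time_path_def)

lemma section_integrable:
  assumes v: "sq_int_process \<mu> v" and w: "w \<in> space \<mu>" and i: "integrable unit_time (\<lambda>s. (norm (v s w))\<^sup>2)"
  shows "integrable unit_time (\<lambda>s. v s w)"
proof -
  interpret finite_measure unit_time by (rule finite_measure_unit_time)
  have le: "norm x \<le> 1 + (norm x)\<^sup>2" for x :: "real^'d"
  proof -
    have "2 * norm x \<le> 1 + (norm x)\<^sup>2" using sum_squares_bound[of "norm x" 1] by simp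
    then show ?thesis using norm_ge_zero[of x] by linarith
  qed
  show ?thesis
    by (rule Bochner_Integration.integrable_bound[of _ "\<lambda>s. 1 + (norm (v s w))\<^sup>2"])
       (use i le sq_int_process_section_measurable[OF v w] in auto)
qed

lemma (in finite_measure) L1_tendsto_0_of_L2:
  fixes f :: "nat \<Rightarrow> 'a \<Rightarrow> real"
  assumes fi: "\<And>n. integrable M (f n)" and f2i: "\<And>n. integrable M (\<lambda>x. (f n x)\<^sup>2)"
    and lim: "(\<lambda>n. \<integral>x. (f n x)\<^sup>2 \<partial>M) \<longlonglongrightarrow> 0"
  shows "(\<lambda>n. \<integral>x. \<bar>f n x\<bar> \<partial>M) \<longlonglongrightarrow> 0"
proof (rule tendsto_0_by_eps)
  fix eps :: real assume eps: "0 < eps"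
  define m where "m = measure M (space M)"
  define e where "e = eps / (2 * (m + 1))"
  have m: "0 \<le> m" by (simp add: m_def)
  have e: "0 < e" using eps m by (simp add: e_def)
  (* pointwise |y| \<le> e + y^2/e *)
  have pw: "\<bar>y\<bar> \<le> e + y\<^sup>2 / e" for y :: real
  proof (cases "\<bar>y\<bar> \<le> e")
    case True
    then show ?thesis using e by (simp add: add_increasing2)
  next
    case False
    then have "\<bar>y\<bar> * e \<le> \<bar>y\<bar> * \<bar>y\<bar>" using e by (intro mult_left_mono) auto
    then have "\<bar>y\<bar> \<le> \<bar>y\<bar>\<^sup>2 / e" using e by (simp add: power2_eq_square field_simps)
    then show ?thesis using e power2_abs[of y] by (smt (verit))
  qed
  have "eventually (\<lambda>n. (\<integral>x. (f n x)\<^sup>2 \<partial>M) < e * (eps / 2)) sequentially"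
    using lim e eps by (intro order_tendstoD) auto
  then show "eventually (\<lambda>n. (\<integral>x. \<bar>f n x\<bar> \<partial>M) \<le> eps) sequentially"
  proof eventually_elim
    case (elim n)
    have "(\<integral>x. \<bar>f n x\<bar> \<partial>M) \<le> (\<integral>x. e + (f n x)\<^sup>2 / e \<partial>M)"
      using fi f2i pw by (intro integral_mono) auto
    also have "\<dots> = e * m + (\<integral>x. (f n x)\<^sup>2 \<partial>M) / e"
      using f2i[of n] by (simp add: m_def)
    also have "e * m \<le> eps / 2" using eps m by (simp add: e_def field_simps)
    also have "(\<integral>x. (f n x)\<^sup>2 \<partial>M) / e \<le> eps / 2" using elim e by (simp add: field_simps)
    finally show ?case by simp
  qed
qed simp

lemma perturb_dist_le:
  assumes iu: "integrable unit_time (\<lambda>s. u s w)" and iv: "integrable unit_time (\<lambda>s. v s w)"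
    and iu2: "integrable unit_time (\<lambda>s. (norm (u s w))\<^sup>2)" and iv2: "integrable unit_time (\<lambda>s. (norm (v s w))\<^sup>2)"
  shows "norm (perturb u w t - perturb v w t) \<le> (\<integral>s. norm (u s w - v s w) \<partial>unit_time)"
proof (cases "t \<in> {0..1}")
  case True
  have sub: "{0..t} \<in> sets lborel" "{0..t} \<subseteq> {0..1::real}" using True by auto
  have Su: "set_integrable lborel {0..t} (\<lambda>s. u s w)" and Sv: "set_integrable lborel {0..t} (\<lambda>s. v s w)"
    using set_integrable_subset[OF _ sub] iu iv by (auto simp: unit_time_integrable_iff)
  have i1: "set_integrable lborel {0..1} (\<lambda>s. norm (u s w - v s w))"
    using iu iv by (simp add: unit_time_integrable_iff[symmetric])
  have "perturb u w t - perturb v w t = (LINT s:{0..t}|lborel. u s w - v s w)"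
    using iu2 iv2 True set_integral_diff(2)[OF Su Sv] by (simp add: perturb_def unit_time_integrable_iff)
  also have "norm \<dots> \<le> (LINT s:{0..t}|lborel. norm (u s w - v s w))"
    by (rule set_integral_norm_bound) (rule set_integral_diff(1)[OF Su Sv])
  also have "\<dots> \<le> (LINT s:{0..1}|lborel. norm (u s w - v s w))"
    unfolding set_lebesgue_integral_def
    by (rule integral_mono[OF set_integrable_subset[OF i1 sub, unfolded set_integrable_def] i1[unfolded set_integrable_def]])
       (use sub in \<open>auto split: split_indicator\<close>)
  finally show ?thesis by (simp add: unit_time_integral)
next
  case False
  then have "perturb u w t = 0" "perturb v w t = 0"
    using iu2 iv2 by (auto simp: perturb_def unit_time_integrable_iff)
  then show ?thesis by (auto intro!: Bochner_Integration.integral_nonneg)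
qed

lemma sq_int_process_diff_bound:
  assumes "h \<noteq> 0" and u: "sq_int_process \<mu> u" and v: "sq_int_process \<mu> v" and D: "sq_int_process \<mu> D"
  shows "(\<integral>(s, w). (norm (u s w - v s w))\<^sup>2 \<partial>time_path \<mu>) \<le>
    2 * h\<^sup>2 * ((\<integral>(s, w). (norm ((1 / h) *\<^sub>R (u s w - v s w) - D s w))\<^sup>2 \<partial>time_path \<mu>)
      + (\<integral>(s, w). (norm (D s w))\<^sup>2 \<partial>time_path \<mu>))"
proof -
  have i2: "integrable (time_path \<mu>) (\<lambda>(s, w). (norm ((1 / h) *\<^sub>R (u s w - v s w) - D s w))\<^sup>2)"
    using sq_int_process_diff_integrable[OF sq_int_process_lincomb[OF u v, of "1 / h" "1 / h"] D]
    by (simp add: scaleR_diff_right)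
  have i3: "integrable (time_path \<mu>) (\<lambda>(s, w). (norm (D s w))\<^sup>2)" using D by (simp add: sq_int_process_def)
  have pw: "(norm d)\<^sup>2 \<le> 2 * h\<^sup>2 * (norm ((1 / h) *\<^sub>R d - e))\<^sup>2 + 2 * h\<^sup>2 * (norm e)\<^sup>2" for d e :: "real^'d"
  proof -
    have sq: "(norm ((1 / h) *\<^sub>R d))\<^sup>2 \<le> 2 * (norm ((1 / h) *\<^sub>R d - e))\<^sup>2 + 2 * (norm e)\<^sup>2"
      using norm_diff_squared_le[of "(1 / h) *\<^sub>R d - e" "- e"] by simp
    have "(norm d)\<^sup>2 = h\<^sup>2 * (norm ((1 / h) *\<^sub>R d))\<^sup>2"
      using assms(1) by (simp add: power_divide field_simps)
    also have "\<dots> \<le> h\<^sup>2 * (2 * (norm ((1 / h) *\<^sub>R d - e))\<^sup>2 + 2 * (norm e)\<^sup>2)"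
      using sq by (rule mult_left_mono) simp
    finally show ?thesis by (simp add: algebra_simps)
  qed
  have "(\<integral>(s, w). (norm (u s w - v s w))\<^sup>2 \<partial>time_path \<mu>) \<le>
    (\<integral>x. 2 * h\<^sup>2 * (case x of (s, w) \<Rightarrow> (norm ((1 / h) *\<^sub>R (u s w - v s w) - D s w))\<^sup>2)
        + 2 * h\<^sup>2 * (case x of (s, w) \<Rightarrow> (norm (D s w))\<^sup>2) \<partial>time_path \<mu>)"
    using sq_int_process_diff_integrable[OF u v] i2 i3 pw
    by (intro integral_mono Bochner_Integration.integrable_add integrable_mult_right) (auto split: prod.split)
  also have "\<dots> = 2 * h\<^sup>2 * ((\<integral>(s, w). (norm ((1 / h) *\<^sub>R (u s w - v s w) - D s w))\<^sup>2 \<partial>time_path \<mu>)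
      + (\<integral>(s, w). (norm (D s w))\<^sup>2 \<partial>time_path \<mu>))"
    using i2 i3 by (simp add: algebra_simps)
  finally show ?thesis .
qed

lemma drift_L2_continuous:
  assumes sqint: "\<And>l. sq_int_process \<mu> (ud l)"
    and diff: "\<exists>D. sq_int_process \<mu> D \<and>
        ((\<lambda>h. \<integral>(s, w). (norm ((1 / h) *\<^sub>R (ud (l + h) s w - ud l s w) - D s w))\<^sup>2 \<partial>time_path \<mu>)
          \<longlongrightarrow> 0) (at 0)"
    and kl: "k \<longlonglongrightarrow> l"
  shows "(\<lambda>n. \<integral>(s, w). (norm (ud (k n) s w - ud l s w))\<^sup>2 \<partial>time_path \<mu>) \<longlonglongrightarrow> 0"
proof -
  obtain D where D: "sq_int_process \<mu> D" and qlim: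
    "((\<lambda>h. \<integral>(s, w). (norm ((1 / h) *\<^sub>R (ud (l + h) s w - ud l s w) - D s w))\<^sup>2 \<partial>time_path \<mu>) \<longlongrightarrow> 0) (at 0)"
    using diff by blast
  define B where "B h = 2 * h\<^sup>2 * ((\<integral>(s, w). (norm ((1 / h) *\<^sub>R (ud (l + h) s w - ud l s w) - D s w))\<^sup>2 \<partial>time_path \<mu>)
      + (\<integral>(s, w). (norm (D s w))\<^sup>2 \<partial>time_path \<mu>))" for h
  have "(B \<longlongrightarrow> 2 * 0\<^sup>2 * (0 + (\<integral>(s, w). (norm (D s w))\<^sup>2 \<partial>time_path \<mu>))) (at 0)"
    unfolding B_def by (intro tendsto_intros qlim)
  then have "isCont B 0" unfolding isCont_def by (simp add: B_def)
  moreover have "(\<lambda>n. k n - l) \<longlonglongrightarrow> 0" using kl by (simp add: LIM_zero)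
  ultimately have "(\<lambda>n. B (k n - l)) \<longlonglongrightarrow> B 0" by (rule isCont_tendsto_compose)
  then have Bl: "(\<lambda>n. B (k n - l)) \<longlonglongrightarrow> 0" by (simp add: B_def)
  show ?thesis
  proof (rule tendsto_0_squeeze[OF Bl])
    show "0 \<le> (\<integral>(s, w). (norm (ud (k n) s w - ud l s w))\<^sup>2 \<partial>time_path \<mu>)" for n
      by (intro integral_nonneg_AE AE_I2) (auto split: prod.split)
    show "(\<integral>(s, w). (norm (ud (k n) s w - ud l s w))\<^sup>2 \<partial>time_path \<mu>) \<le> B (k n - l)" for n
      using sq_int_process_diff_bound[OF _ sqint sqint D, of "k n - l" "k n" l]
      by (cases "k n = l") (auto simp: B_def case_prod_beta')
  qed
qed

(* For a fixed w: if the time sections of the drifts u n converge to those of v in L^2(dt),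
   the perturbed paths converge pointwise, being controlled by the L^1(dt) distance. *)
lemma perturb_tendsto_of_sections:
  assumes u: "\<And>n. sq_int_process \<mu> (u n)" and v: "sq_int_process \<mu> v" and w: "w \<in> space \<mu>"
    and iv: "integrable unit_time (\<lambda>s. (norm (v s w))\<^sup>2)"
    and iu: "\<And>n. integrable unit_time (\<lambda>s. (norm (u n s w))\<^sup>2)"
    and lim: "(\<lambda>n. \<integral>s. (norm (u n s w - v s w))\<^sup>2 \<partial>unit_time) \<longlonglongrightarrow> 0"
  shows "(\<lambda>n. perturb (u n) w t) \<longlonglongrightarrow> perturb v w t"
proof -
  interpret T: finite_measure unit_time by (rule finite_measure_unit_time)
  note v1 = section_integrable[OF v w iv] and u1 = section_integrable[OF u w iu]
  note [measurable] = sq_int_process_section_measurable[OF u w] sq_int_process_section_measurable[OF v w]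
  have L1: "(\<lambda>n. \<integral>s. \<bar>norm (u n s w - v s w)\<bar> \<partial>unit_time) \<longlonglongrightarrow> 0"
  proof (rule T.L1_tendsto_0_of_L2[OF _ _ lim])
    show "integrable unit_time (\<lambda>s. norm (u n s w - v s w))" for n using u1 v1 by auto
    show "integrable unit_time (\<lambda>s. (norm (u n s w - v s w))\<^sup>2)" for n
      by (rule integrable_norm_diff_squared) (use iu iv in auto)
  qed
  have bnd: "norm (perturb (u n) w t - perturb v w t) \<le> (\<integral>s. \<bar>norm (u n s w - v s w)\<bar> \<partial>unit_time)" for n
    using perturb_dist_le[where u="u n" and v=v and w=w and t=t, OF u1 v1 iu iv] by simp
  have "(\<lambda>n. norm (perturb (u n) w t - perturb v w t)) \<longlonglongrightarrow> 0"
    by (rule tendsto_0_squeeze[OF L1 _ bnd]) simp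
  then show ?thesis by (simp add: tendsto_norm_zero_iff LIM_zero_iff)
qed

(* Along a subsequence, the perturbed paths converge pointwise for almost every w: the
   squared L^2(dt) distance of the time sections converges to 0 in L^1(\<mu>), hence a.e.
   along a subsequence. *)
lemma perturb_conv_AE_subseq:
  assumes "prob_space \<mu>"
    and sqint: "\<And>l. sq_int_process \<mu> (ud l)"
    and L2: "(\<lambda>n. \<integral>(s, w). (norm (ud (k n) s w - ud l s w))\<^sup>2 \<partial>time_path \<mu>) \<longlonglongrightarrow> 0"
  shows "\<exists>r::nat\<Rightarrow>nat. strict_mono r \<and>
    (AE w in \<mu>. \<forall>t. (\<lambda>n. perturb (ud (k (r n))) w t) \<longlonglongrightarrow> perturb (ud l) w t)"
proof -
  interpret \<mu>: prob_space \<mu> by fact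
  interpret T: finite_measure unit_time by (rule finite_measure_unit_time)
  interpret P: pair_sigma_finite unit_time \<mu> by unfold_locales
  define a where "a n w = (\<integral>s. (norm (ud (k n) s w - ud l s w))\<^sup>2 \<partial>unit_time)" for n w
  have fi: "integrable (unit_time \<Otimes>\<^sub>M \<mu>) (\<lambda>(s, w). (norm (ud (k n) s w - ud l s w))\<^sup>2)" for n
    using sq_int_process_diff_integrable[OF sqint sqint] by (simp add: time_path_def)
  have ai: "integrable \<mu> (a n)" for n unfolding a_def using P.integrable_snd[OF fi[of n]] .
  have a_L1: "(\<lambda>n. \<integral>w. norm (a n w) \<partial>\<mu>) \<longlonglongrightarrow> 0"
  proof -
    have "(\<integral>w. norm (a n w) \<partial>\<mu>) = (\<integral>(s, w). (norm (ud (k n) s w - ud l s w))\<^sup>2 \<partial>time_path \<mu>)" for n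
      using P.integral_snd[OF fi[of n]] by (simp add: a_def integral_nonneg time_path_def)
    then show ?thesis using L2 by simp
  qed
  then obtain r :: "nat \<Rightarrow> nat" where r: "strict_mono r" and alim: "AE w in \<mu>. (\<lambda>n. a (r n) w) \<longlonglongrightarrow> 0"
    using tendsto_L1_AE_subseq[OF ai a_L1] by blast
  have sec_int: "AE w in \<mu>. integrable unit_time (\<lambda>s. (norm (ud j s w))\<^sup>2)" for j
    using P.AE_integrable_snd[OF sqint[of j, unfolded sq_int_process_def time_path_def, THEN conjunct2]] by simp
  have "AE w in \<mu>. \<forall>n. integrable unit_time (\<lambda>s. (norm (ud (k (r n)) s w))\<^sup>2)"
    using sec_int by (simp add: AE_all_countable)
  then have "AE w in \<mu>. \<forall>t. (\<lambda>n. perturb (ud (k (r n))) w t) \<longlonglongrightarrow> perturb (ud l) w t"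
    using alim sec_int[of l] AE_space
  proof eventually_elim
    case (elim w)
    show ?case
      using perturb_tendsto_of_sections[where u="\<lambda>n. ud (k (r n))" and v="ud l",
          OF sqint sqint elim(4) elim(3) elim(1)[rule_format]] elim(2)
      by (simp add: a_def)
  qed
  then show ?thesis using r by blast
qed

locale cond_exp_images = prob_space \<mu> for \<mu> :: "'a measure" +
  fixes U :: "real \<Rightarrow> 'a \<Rightarrow> 'a" and L g :: "real \<Rightarrow> 'a \<Rightarrow> real" and F :: "'a \<Rightarrow> real" and p :: real
  assumes U_density: "\<And>l. image_density \<mu> (U l) (L l)"
    and L_pos: "\<And>l. AE w in \<mu>. 0 < L l w"
    and Linv_int: "\<And>q l. 1 \<le> q \<Longrightarrow> integrable \<mu> (\<lambda>w. (1 / L l w) powr q)"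
    and p_gt: "1 < p"
    and F_meas[measurable]: "F \<in> borel_measurable \<mu>"
    and F_Lp: "integrable \<mu> (\<lambda>w. \<bar>F w\<bar> powr p)"
    and g_meas[measurable]: "\<And>l. g l \<in> borel_measurable \<mu>"
    and g_cond: "\<And>l. AE w in \<mu>.
        real_cond_exp \<mu> (vimage_algebra (space \<mu>) (U l) \<mu>) F w = g l (U l w)"
begin

lemma measurable_U_L[measurable]: "U l \<in> measurable \<mu> \<mu>" "L l \<in> borel_measurable \<mu>"
  using U_density by (auto simp: image_density_def)

lemma L_nonneg: "0 \<le> L l w"
  using U_density by (auto simp: image_density_def)

lemma L_integrable: "integrable \<mu> (L l)"
  by (rule image_density_integrable[OF U_density])

lemma sigma_finite_subalgebra_U: "sigma_finite_subalgebra \<mu> (vimage_algebra (space \<mu>) (U l) \<mu>)"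
proof -
  have "U l \<in> space \<mu> \<rightarrow> space \<mu>" using measurable_space[OF measurable_U_L(1)] by (simp add: Pi_iff)
  then have "sets (vimage_algebra (space \<mu>) (U l) \<mu>) = {U l -` A \<inter> space \<mu> |A. A \<in> sets \<mu>}"
    by (rule sets_vimage_algebra2)
  then have "subalgebra \<mu> (vimage_algebra (space \<mu>) (U l) \<mu>)"
    unfolding subalgebra_def using measurable_sets[OF measurable_U_L(1)] by auto
  then show ?thesis
    by (intro finite_measure_subalgebra_is_sigma_finite)
       (simp add: finite_measure_subalgebra_def finite_measure_subalgebra_axioms_def finite_measure_axioms)
qed

lemma F_integrable: "integrable \<mu> F"
proof (rule Bochner_Integration.integrable_bound[OF _ F_meas])
  show "integrable \<mu> (\<lambda>w. 1 + \<bar>F w\<bar> powr p)" by (intro Bochner_Integration.integrable_add integrable_const F_Lp)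
  have "norm (F w) \<le> norm (1 + \<bar>F w\<bar> powr p)" for w
    using powr_le_1_plus_powr[of "\<bar>F w\<bar>" 1 p] p_gt by simp
  then show "AE w in \<mu>. norm (F w) \<le> norm (1 + \<bar>F w\<bar> powr p)" by simp
qed

(* Conditional Jensen: g l \<circ> U l is in L^p. *)
lemma cond_exp_Lp: "integrable \<mu> (\<lambda>w. \<bar>g l (U l w)\<bar> powr p)"
proof -
  define V where "V = vimage_algebra (space \<mu>) (U l) \<mu>"
  interpret V: sigma_finite_subalgebra \<mu> V unfolding V_def by (rule sigma_finite_subalgebra_U)
  have iF1: "integrable \<mu> (\<lambda>w. \<bar>F w\<bar> + 1)" using F_integrable by auto
  have iq: "integrable \<mu> (\<lambda>w. (\<bar>F w\<bar> + 1) powr p)"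
  proof (rule Bochner_Integration.integrable_bound)
    show "integrable \<mu> (\<lambda>w. 2 powr p * (\<bar>F w\<bar> powr p + 1))"
      by (intro integrable_mult_right Bochner_Integration.integrable_add integrable_const F_Lp)
    have "(\<bar>F x\<bar> + 1) powr p \<le> 2 powr p * (\<bar>F x\<bar> powr p + 1)" for x
      using powr_le_two_powr_dist[of "\<bar>F x\<bar> + 1" 1 p] p_gt by simp
    then show "AE x in \<mu>. norm ((\<bar>F x\<bar> + 1) powr p) \<le> norm (2 powr p * (\<bar>F x\<bar> powr p + 1))"
      by (intro AE_I2) (simp add: order_trans[OF _ abs_ge_self])
  qed measurable
  (* |E[F|V]| \<le> E[|F|+1 | V] =: C, and C^p \<le> E[(|F|+1)^p | V] *)
  define C where "C = real_cond_exp \<mu> V (\<lambda>w. \<bar>F w\<bar> + 1)"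
  have J: "AE w in \<mu>. C w \<in> {0<..}" "AE w in \<mu>. C w powr p \<le> real_cond_exp \<mu> V (\<lambda>w. (\<bar>F w\<bar> + 1) powr p) w"
    unfolding C_def
    by (rule V.real_cond_exp_jensens_inequality[OF iF1 _ _ iq powr_convex], (use p_gt in auto))+
  have m1: "AE w in \<mu>. real_cond_exp \<mu> V F w \<le> C w" unfolding C_def
    by (rule V.real_cond_exp_mono[OF _ F_integrable iF1]) auto
  have m2: "AE w in \<mu>. real_cond_exp \<mu> V (\<lambda>w. - F w) w \<le> C w" unfolding C_def
    by (rule V.real_cond_exp_mono[OF _ _ iF1]) (use F_integrable in auto)
  have m3: "AE w in \<mu>. real_cond_exp \<mu> V (\<lambda>w. -1 * F w) w = -1 * real_cond_exp \<mu> V F w"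
    by (rule V.real_cond_exp_cmult[OF F_integrable])
  have bd: "AE w in \<mu>. \<bar>g l (U l w)\<bar> powr p \<le> real_cond_exp \<mu> V (\<lambda>w. (\<bar>F w\<bar> + 1) powr p) w"
    using m1 m2 m3 J g_cond[of l]
  proof eventually_elim
    case (elim w)
    have "\<bar>g l (U l w)\<bar> \<le> C w" using elim unfolding V_def by auto
    then have "\<bar>g l (U l w)\<bar> powr p \<le> C w powr p" using p_gt by (intro powr_mono2) auto
    then show ?case using elim by linarith
  qed
  show ?thesis
  proof (rule Bochner_Integration.integrable_bound[OF V.real_cond_exp_int(1)[OF iq]])
    show "(\<lambda>w. \<bar>g l (U l w)\<bar> powr p) \<in> borel_measurable \<mu>" by measurable
  qed (use bd in \<open>auto elim!: eventually_mono\<close>)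
qed

(* Transported back through the density: L l |g l|^p is integrable. *)
lemma weighted_Lp: "integrable \<mu> (\<lambda>w. L l w * \<bar>g l w\<bar> powr p)"
  using cond_exp_Lp[of l] image_density_integrable_iff[OF U_density, of "\<lambda>w. \<bar>g l w\<bar> powr p"] by simp

(* First claim: g l \<in> L^{p'} for p' < p, splitting by the size of L l |g l|^(p - p'). *)
theorem cond_exp_version_Lp:
  assumes "1 \<le> p'" "p' < p"
  shows "integrable \<mu> (\<lambda>w. \<bar>g l w\<bar> powr p')"
proof (rule Bochner_Integration.integrable_bound)
  let ?c = "p' / (p - p') + 1"
  show "integrable \<mu> (\<lambda>w. L l w * \<bar>g l w\<bar> powr (p' + (p - p')) + (1 + (1 / L l w) powr ?c))"
    using weighted_Lp[of l] Linv_int[of ?c l] assms p_gt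
    by (intro Bochner_Integration.integrable_add integrable_const) auto
  show "AE w in \<mu>. norm (\<bar>g l w\<bar> powr p') \<le> norm (L l w * \<bar>g l w\<bar> powr (p' + (p - p')) + (1 + (1 / L l w) powr ?c))"
    using L_pos[of l]
  proof eventually_elim
    case (elim w)
    have "\<bar>g l w\<bar> powr p' \<le> L l w * \<bar>g l w\<bar> powr (p' + (p - p')) + (1 + (1 / L l w) powr ?c)"
      using elim assms by (intro powr_le_weighted_split) auto
    moreover have "0 \<le> L l w * \<bar>g l w\<bar> powr (p' + (p - p')) + (1 + (1 / L l w) powr ?c)"
      using elim by (intro add_nonneg_nonneg) auto
    ultimately show ?case by simp
  qed
qed measurable

end

(* A test function h in L^{p'*} (or L^\<infinity> when p' = 1), p' < p, satisfies the pointwise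
   domination |h|^{p*} x^{p*-1} \<le> D + K (1 + x^Q) with D integrable; at x = 1/L this controls
   the dual norm of h \<circ> U / L \<circ> U.  (Here p* = p/(p-1) is the exponent dual to p.) *)
lemma dual_exponent_domination:
  fixes h :: "'a \<Rightarrow> real"
  assumes p: "1 < p" and p': "1 \<le> p'" "p' < p"
    and hc: "if p' = 1 then (\<exists>C. AE w in M. \<bar>h w\<bar> \<le> C) else integrable M (\<lambda>w. \<bar>h w\<bar> powr (p' / (p' - 1)))"
  obtains D K Q where "integrable M D" "0 \<le> K" "1 \<le> Q"
    "AE w in M. \<forall>x\<ge>0. \<bar>h w\<bar> powr (p / (p - 1)) * x powr (p / (p - 1) - 1) \<le> D w + K * (1 + x powr Q)"
proof -
  let ?q = "p / (p - 1)"
  have q: "1 < ?q" using p by (simp add: field_simps)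
  show ?thesis
  proof (cases "p' = 1")
    case True
    then obtain C where C: "AE w in M. \<bar>h w\<bar> \<le> C" using hc by auto
    have "\<bar>h w\<bar> powr ?q * x powr (?q - 1) \<le> 0 + \<bar>C\<bar> powr ?q * (1 + x powr max 1 (?q - 1))"
      if "\<bar>h w\<bar> \<le> C" "0 \<le> x" for w x
    proof -
      have "\<bar>h w\<bar> powr ?q \<le> \<bar>C\<bar> powr ?q" using that q by (intro powr_mono2) auto
      moreover have "x powr (?q - 1) \<le> 1 + x powr (max 1 (?q - 1))"
        by (rule powr_le_1_plus_powr) (use that q in auto)
      ultimately show ?thesis by (simp add: mult_mono)
    qed
    then show ?thesis
      using C by (intro that[of "\<lambda>w. 0" "\<bar>C\<bar> powr ?q" "max 1 (?q - 1)"]) (auto elim!: eventually_mono)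
  next
    case False
    let ?s = "p' / (p' - 1)"
    let ?Q = "max 1 ((?q - 1) * ((?s / ?q) / (?s / ?q - 1)))"
    have qs: "?q < ?s" using p' p False by (simp add: field_simps)
    have "\<bar>h w\<bar> powr ?q * x powr (?q - 1) \<le> \<bar>h w\<bar> powr ?s + (1 + x powr ?Q)" if "0 \<le> x" for w x
      using powr_mult_le_young[OF abs_ge_zero that q qs] .
    then show ?thesis
      using hc False by (intro that[of "\<lambda>w. \<bar>h w\<bar> powr ?s" 1 ?Q]) auto
  qed
qed

locale weak_continuity = cond_exp_images +
  assumes L_as_cont: "AE w in \<mu>. continuous_on UNIV (\<lambda>l. L l w)"
    and Linv_as_cont: "AE w in \<mu>. continuous_on UNIV (\<lambda>l. 1 / L l w)"
    and L_L1_cont: "\<And>k l. k \<longlonglongrightarrow> l \<Longrightarrow> (\<lambda>n. \<integral>w. \<bar>L (k n) w - L l w\<bar> \<partial>\<mu>) \<longlonglongrightarrow> 0"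
    and Linv_Lq_cont: "\<And>q k l. 1 \<le> q \<Longrightarrow> k \<longlonglongrightarrow> l \<Longrightarrow>
        (\<lambda>n. \<integral>w. \<bar>1 / L (k n) w - 1 / L l w\<bar> powr q \<partial>\<mu>) \<longlonglongrightarrow> 0"
    and images_conv: "\<And>k l. k \<longlonglongrightarrow> l \<Longrightarrow> \<exists>r::nat\<Rightarrow>nat. strict_mono r \<and>
        (\<forall>f \<in> borel_measurable \<mu>. conv_in_prob \<mu> (\<lambda>n w. f (U (k (r n)) w)) (\<lambda>w. f (U l w)))"
begin

lemma L_AE_tendsto:
  assumes kl: "k \<longlonglongrightarrow> l"
  shows "AE w in \<mu>. (\<lambda>n. L (k n) w) \<longlonglongrightarrow> L l w"
  using L_as_cont
proof eventually_elim
  case (elim w)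
  show ?case by (rule continuous_on_tendsto_compose[OF elim kl]) auto
qed

lemma Linv_AE_tendsto:
  assumes kl: "k \<longlonglongrightarrow> l"
  shows "AE w in \<mu>. (\<lambda>n. 1 / L (k n) w) \<longlonglongrightarrow> 1 / L l w"
  using Linv_as_cont
proof eventually_elim
  case (elim w)
  show ?case using continuous_on_tendsto_compose[OF elim kl] by simp
qed

(* (1/L)^Q is continuous in L^1, by domination through the L^Q continuity of 1/L. *)
lemma Linv_powr_L1_cont:
  assumes Q: "1 \<le> Q" and kl: "k \<longlonglongrightarrow> l"
  shows "(\<lambda>n. \<integral>w. \<bar>(1 / L (k n) w) powr Q - (1 / L l w) powr Q\<bar> \<partial>\<mu>) \<longlonglongrightarrow> 0"
proof (rule L1_convergence_by_converging_domination[where G="\<lambda>n w. 2 powr Q * (\<bar>1 / L (k n) w - 1 / L l w\<bar> powr Q + (1 / L l w) powr Q)"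
      and Gl="\<lambda>w. 2 powr Q * (1 / L l w) powr Q"])
  show "AE x in \<mu>. (\<lambda>n. (1 / L (k n) x) powr Q) \<longlonglongrightarrow> (1 / L l x) powr Q"
    using Linv_AE_tendsto[OF kl] L_pos[of l]
    by eventually_elim (intro tendsto_powr tendsto_const, auto)
  show "AE x in \<mu>. \<bar>(1 / L (k n) x) powr Q\<bar> \<le> 2 powr Q * (\<bar>1 / L (k n) x - 1 / L l x\<bar> powr Q + (1 / L l x) powr Q)" for n
    using Q by (intro AE_I2) (simp add: powr_le_two_powr_dist L_nonneg)
  have i1: "integrable \<mu> (\<lambda>w. \<bar>1 / L (k n) w - 1 / L l w\<bar> powr Q)" for n
  proof (rule Bochner_Integration.integrable_bound[where f="\<lambda>w. 2 powr Q * ((1 / L l w) powr Q + (1 / L (k n) w) powr Q)"])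
    show "integrable \<mu> (\<lambda>w. 2 powr Q * ((1 / L l w) powr Q + (1 / L (k n) w) powr Q))"
      using Linv_int[OF Q] by auto
    have "\<bar>\<bar>1 / L (k n) x - 1 / L l x\<bar> - 1 / L l x\<bar> \<le> 1 / L (k n) x" for x
      using L_nonneg[of "k n" x] L_nonneg[of l x] by (auto simp: abs_if)
    then have "\<bar>\<bar>1 / L (k n) x - 1 / L l x\<bar> - 1 / L l x\<bar> powr Q \<le> (1 / L (k n) x) powr Q" for x
      using Q by (intro powr_mono2) auto
    moreover have "\<bar>1 / L (k n) x - 1 / L l x\<bar> powr Q \<le> 2 powr Q * (\<bar>\<bar>1 / L (k n) x - 1 / L l x\<bar> - 1 / L l x\<bar> powr Q + (1 / L l x) powr Q)" for x
      using Q by (intro powr_le_two_powr_dist) (auto simp: L_nonneg)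
    ultimately have "\<bar>1 / L (k n) x - 1 / L l x\<bar> powr Q \<le> 2 powr Q * ((1 / L l x) powr Q + (1 / L (k n) x) powr Q)" for x
      by (smt (verit, ccfv_SIG) mult_left_mono powr_ge_zero)
    then show "AE x in \<mu>. norm (\<bar>1 / L (k n) x - 1 / L l x\<bar> powr Q) \<le> norm (2 powr Q * ((1 / L l x) powr Q + (1 / L (k n) x) powr Q))"
      by (intro AE_I2) (simp add: L_nonneg)
  qed measurable
  then show "integrable \<mu> (\<lambda>w. 2 powr Q * (\<bar>1 / L (k n) w - 1 / L l w\<bar> powr Q + (1 / L l w) powr Q))" for n
    using Linv_int[OF Q] by auto
  show "integrable \<mu> (\<lambda>w. 2 powr Q * (1 / L l w) powr Q)" using Linv_int[OF Q] by auto
  have "(\<lambda>n. 2 powr Q * (\<integral>w. \<bar>1 / L (k n) w - 1 / L l w\<bar> powr Q \<partial>\<mu>)) \<longlonglongrightarrow> 2 powr Q * 0"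
    by (intro tendsto_intros Linv_Lq_cont Q kl)
  then show "(\<lambda>n. \<integral>w. \<bar>2 powr Q * (\<bar>1 / L (k n) w - 1 / L l w\<bar> powr Q + (1 / L l w) powr Q) - 2 powr Q * (1 / L l w) powr Q\<bar> \<partial>\<mu>) \<longlonglongrightarrow> 0"
    by (simp add: algebra_simps)
qed measurable

(* The densities themselves converge in probability after composing with U (k n):
   \<integral> min 1 |1/L_kn - 1/L_l| \<circ> U_kn = \<integral> L_kn min 1 |1/L_kn - 1/L_l| \<rightarrow> 0. *)
lemma density_images_conv:
  assumes kl: "k \<longlonglongrightarrow> l"
  shows "conv_in_prob \<mu> (\<lambda>n w. 1 / L (k n) (U (k n) w) - 1 / L l (U (k n) w)) (\<lambda>w. 0)"
proof -
  have eq: "(\<integral>w. min 1 \<bar>1 / L (k n) (U (k n) w) - 1 / L l (U (k n) w) - 0\<bar> \<partial>\<mu>)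
      = (\<integral>w. \<bar>L (k n) w * min 1 \<bar>1 / L (k n) w - 1 / L l w\<bar> - 0\<bar> \<partial>\<mu>)" for n
    by (subst image_density_integral[OF U_density]) (auto simp: L_nonneg abs_mult)
  have "(\<lambda>n. \<integral>w. \<bar>L (k n) w * min 1 \<bar>1 / L (k n) w - 1 / L l w\<bar> - 0\<bar> \<partial>\<mu>) \<longlonglongrightarrow> 0"
  proof (rule L1_convergence_by_converging_domination[where G="\<lambda>n. L (k n)" and Gl="L l"])
    show "AE x in \<mu>. (\<lambda>n. L (k n) x * min 1 \<bar>1 / L (k n) x - 1 / L l x\<bar>) \<longlonglongrightarrow> 0"
      using L_AE_tendsto[OF kl] Linv_AE_tendsto[OF kl]
    proof eventually_elim
      case (elim w)
      have "(\<lambda>n. L (k n) w * min 1 \<bar>1 / L (k n) w - 1 / L l w\<bar>) \<longlonglongrightarrow> L l w * min 1 \<bar>1 / L l w - 1 / L l w\<bar>"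
        by (intro tendsto_intros elim)
      then show ?case by simp
    qed
    show "AE x in \<mu>. \<bar>L (k n) x * min 1 \<bar>1 / L (k n) x - 1 / L l x\<bar>\<bar> \<le> L (k n) x" for n
      by (intro AE_I2) (simp add: L_nonneg abs_mult mult_left_le)
    show "(\<lambda>n. \<integral>w. \<bar>L (k n) w - L l w\<bar> \<partial>\<mu>) \<longlonglongrightarrow> 0" by (rule L_L1_cont[OF kl])
  qed (auto simp: L_integrable)
  then show ?thesis unfolding conv_in_prob_def eq .
qed

end

locale dual_test = weak_continuity +
  fixes h D :: "'a \<Rightarrow> real" and K Q :: real
  assumes h_meas[measurable]: "h \<in> borel_measurable \<mu>"
    and D_int: "integrable \<mu> D" and K: "0 \<le> K" and Q: "1 \<le> Q"
    and h_dom: "AE w in \<mu>. \<forall>x\<ge>0. \<bar>h w\<bar> powr (p / (p - 1)) * x powr (p / (p - 1) - 1) \<le> D w + K * (1 + x powr Q)"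
begin

abbreviation p_dual :: real where "p_dual \<equiv> p / (p - 1)"

lemma p_dual_gt: "1 < p_dual" using p_gt by (simp add: field_simps)

(* E[g l h] = E[F Y l] with Y l = (h / L l) \<circ> U l, whose p_dual-th moment is E[W l]. *)
definition Y :: "real \<Rightarrow> 'a \<Rightarrow> real" where "Y k w = h (U k w) / L k (U k w)"
definition W :: "real \<Rightarrow> 'a \<Rightarrow> real" where "W k w = \<bar>h w\<bar> powr p_dual * (1 / L k w) powr (p_dual - 1)"

lemma Y_measurable[measurable]: "Y k \<in> borel_measurable \<mu>" unfolding Y_def by measurable
lemma W_measurable[measurable]: "W k \<in> borel_measurable \<mu>" unfolding W_def by measurable

lemma W_dom: "AE w in \<mu>. \<bar>W k w\<bar> \<le> D w + K * (1 + (1 / L k w) powr Q)"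
  using h_dom by eventually_elim (auto simp: W_def L_nonneg)

lemma W_integrable: "integrable \<mu> (W k)"
proof (rule Bochner_Integration.integrable_bound[where f="\<lambda>w. D w + K * (1 + (1 / L k w) powr Q)"])
  show "integrable \<mu> (\<lambda>w. D w + K * (1 + (1 / L k w) powr Q))" using D_int Linv_int[OF Q] by auto
  show "AE x in \<mu>. norm (W k x) \<le> norm (D x + K * (1 + (1 / L k x) powr Q))"
    using W_dom[of k] by eventually_elim (metis abs_ge_self order_trans real_norm_def)
qed measurable

lemma Y_moment_density: "AE w in \<mu>. L k w * \<bar>h w / L k w\<bar> powr p_dual = W k w"
  using L_pos[of k]
proof eventually_elim
  case (elim w)
  then have "L k w * (\<bar>h w\<bar> / L k w) powr p_dual = \<bar>h w\<bar> powr p_dual * (1 / L k w) powr (p_dual - 1)"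
    by (intro mult_powr_divide) auto
  then show ?case using elim by (simp add: W_def)
qed

lemma Y_moment_integrable: "integrable \<mu> (\<lambda>w. \<bar>Y k w\<bar> powr p_dual)"
proof -
  have "integrable \<mu> (\<lambda>w. L k w * \<bar>h w / L k w\<bar> powr p_dual)"
    using W_integrable[of k] Y_moment_density[of k] by (subst integrable_cong_AE) auto
  then show ?thesis
    unfolding Y_def using image_density_integrable_iff[OF U_density, of "\<lambda>w. \<bar>h w / L k w\<bar> powr p_dual" k] by simp
qed

lemma Y_moment: "(\<integral>w. \<bar>Y k w\<bar> powr p_dual \<partial>\<mu>) = integral\<^sup>L \<mu> (W k)"
proof -
  have "(\<integral>w. \<bar>Y k w\<bar> powr p_dual \<partial>\<mu>) = (\<integral>w. L k w * \<bar>h w / L k w\<bar> powr p_dual \<partial>\<mu>)"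
    unfolding Y_def by (rule image_density_integral[OF U_density]) measurable
  also have "\<dots> = integral\<^sup>L \<mu> (W k)" using Y_moment_density[of k] by (intro integral_cong_AE) auto
  finally show ?thesis .
qed

(* Young's inequality for the pair (p, p_dual) makes F Y k integrable. *)
lemma young_dual: "\<bar>a * b\<bar> \<le> \<bar>a\<bar> powr p / p + \<bar>b\<bar> powr p_dual / p_dual" for a b :: real
  using Youngs_inequality[of p p_dual "\<bar>a\<bar>" "\<bar>b\<bar>"] p_gt p_dual_gt by (simp add: abs_mult field_simps)

lemma FY_integrable: "integrable \<mu> (\<lambda>w. F w * Y k w)"
  by (rule Bochner_Integration.integrable_bound[where f="\<lambda>w. \<bar>F w\<bar> powr p / p + \<bar>Y k w\<bar> powr p_dual / p_dual"])
     (use F_Lp Y_moment_integrable[of k] young_dual p_gt p_dual_gt in \<open>auto intro!: AE_I2\<close>)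

(* The change of variables through U k and the defining property of g k. *)
lemma pairing_eq: "(\<integral>w. g k w * h w \<partial>\<mu>) = (\<integral>w. F w * Y k w \<partial>\<mu>)"
proof -
  define V where "V = vimage_algebra (space \<mu>) (U k) \<mu>"
  interpret V: sigma_finite_subalgebra \<mu> V unfolding V_def by (rule sigma_finite_subalgebra_U)
  have "U k \<in> measurable V \<mu>"
    unfolding V_def using measurable_space[OF measurable_U_L(1)] by (intro measurable_vimage_algebra1) auto
  from measurable_compose[OF this, of "\<lambda>w. h w / L k w"]
  have YV: "Y k \<in> borel_measurable V" unfolding Y_def by simp
  have "(\<integral>w. g k w * h w \<partial>\<mu>) = (\<integral>w. L k w * (g k w * h w / L k w) \<partial>\<mu>)"
    using L_pos[of k] by (intro integral_cong_AE) (auto elim!: eventually_mono)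
  also have "\<dots> = (\<integral>w. g k (U k w) * h (U k w) / L k (U k w) \<partial>\<mu>)"
    by (rule image_density_integral[OF U_density, symmetric]) measurable
  also have "\<dots> = (\<integral>w. Y k w * real_cond_exp \<mu> V F w \<partial>\<mu>)"
    using g_cond[of k] unfolding V_def
    by (intro integral_cong_AE) (auto simp: Y_def elim!: eventually_mono)
  also have "\<dots> = (\<integral>w. Y k w * F w \<partial>\<mu>)"
    by (rule V.real_cond_exp_intg(2)) (use FY_integrable[of k] YV in \<open>auto simp: mult.commute\<close>)
  finally show ?thesis by (simp add: mult.commute)
qed

(* W is continuous in L^1, by domination through the L^1 continuity of (1/L)^Q. *)
lemma W_L1_cont:
  assumes kl: "k \<longlonglongrightarrow> l"
  shows "(\<lambda>n. \<integral>w. \<bar>W (k n) w - W l w\<bar> \<partial>\<mu>) \<longlonglongrightarrow> 0"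
proof (rule L1_convergence_by_converging_domination[where G="\<lambda>n w. D w + K * (1 + (1 / L (k n) w) powr Q)"
      and Gl="\<lambda>w. D w + K * (1 + (1 / L l w) powr Q)"])
  show "AE x in \<mu>. (\<lambda>n. W (k n) x) \<longlonglongrightarrow> W l x"
    using Linv_AE_tendsto[OF kl] L_pos[of l]
    by eventually_elim (unfold W_def, intro tendsto_mult tendsto_const tendsto_powr, auto)
  have "(\<integral>w. \<bar>D w + K * (1 + (1 / L (k n) w) powr Q) - (D w + K * (1 + (1 / L l w) powr Q))\<bar> \<partial>\<mu>)
      = K * (\<integral>w. \<bar>(1 / L (k n) w) powr Q - (1 / L l w) powr Q\<bar> \<partial>\<mu>)" for n
  proof -
    have "\<bar>D w + K * (1 + a) - (D w + K * (1 + b))\<bar> = K * \<bar>a - b\<bar>" for w and a b :: real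
      using K by (simp add: abs_mult right_diff_distrib[symmetric])
    then show ?thesis by simp
  qed
  moreover have "(\<lambda>n. K * (\<integral>w. \<bar>(1 / L (k n) w) powr Q - (1 / L l w) powr Q\<bar> \<partial>\<mu>)) \<longlonglongrightarrow> K * 0"
    by (intro tendsto_intros Linv_powr_L1_cont[OF Q kl])
  ultimately show "(\<lambda>n. \<integral>w. \<bar>D w + K * (1 + (1 / L (k n) w) powr Q) - (D w + K * (1 + (1 / L l w) powr Q))\<bar> \<partial>\<mu>) \<longlonglongrightarrow> 0"
    by simp
qed (use W_dom D_int Linv_int[OF Q] in auto)

lemma Y_AE_subseq:
  assumes kl: "k \<longlonglongrightarrow> l"
  shows "\<exists>r::nat\<Rightarrow>nat. strict_mono r \<and> (AE w in \<mu>. (\<lambda>n. Y (k (r n)) w) \<longlonglongrightarrow> Y l w)"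
proof -
  obtain r1 :: "nat \<Rightarrow> nat" where r1: "strict_mono r1" and conv:
    "\<And>f. f \<in> borel_measurable \<mu> \<Longrightarrow> conv_in_prob \<mu> (\<lambda>n w. f (U (k (r1 n)) w)) (\<lambda>w. f (U l w))"
    using images_conv[OF kl] by blast
  define k1 where "k1 n = k (r1 n)" for n
  have k1l: "k1 \<longlonglongrightarrow> l" unfolding k1_def using LIMSEQ_subseq_LIMSEQ[OF kl r1] by (simp add: o_def)
  have ch: "conv_in_prob \<mu> (\<lambda>n w. h (U (k1 n) w)) (\<lambda>w. h (U l w))"
    unfolding k1_def by (rule conv) measurable
  have "conv_in_prob \<mu> (\<lambda>n w. (1 / L (k1 n) (U (k1 n) w) - 1 / L l (U (k1 n) w)) + 1 / L l (U (k1 n) w))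
      (\<lambda>w. 0 + 1 / L l (U l w))"
  proof (rule conv_in_prob_add[OF _ _ _ _ density_images_conv[OF k1l]])
    show "conv_in_prob \<mu> (\<lambda>n w. 1 / L l (U (k1 n) w)) (\<lambda>w. 1 / L l (U l w))"
      unfolding k1_def by (rule conv) measurable
  qed measurable
  then have cL: "conv_in_prob \<mu> (\<lambda>n w. 1 / L (k1 n) (U (k1 n) w)) (\<lambda>w. 1 / L l (U l w))" by simp
  have "\<exists>r2::nat\<Rightarrow>nat. strict_mono r2 \<and> (AE w in \<mu>. (\<lambda>n. h (U (k1 (r2 n)) w)) \<longlonglongrightarrow> h (U l w) \<and>
      (\<lambda>n. 1 / L (k1 (r2 n)) (U (k1 (r2 n)) w)) \<longlonglongrightarrow> 1 / L l (U l w))"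
    by (rule conv_in_prob_AE_subseq[OF _ _ _ _ ch cL]) measurable
  then obtain r2 :: "nat \<Rightarrow> nat" where r2: "strict_mono r2"
    and ae: "AE w in \<mu>. (\<lambda>n. h (U (k1 (r2 n)) w)) \<longlonglongrightarrow> h (U l w) \<and>
      (\<lambda>n. 1 / L (k1 (r2 n)) (U (k1 (r2 n)) w)) \<longlonglongrightarrow> 1 / L l (U l w)"
    by blast
  have "AE w in \<mu>. (\<lambda>n. Y (k1 (r2 n)) w) \<longlonglongrightarrow> Y l w"
    using ae by eventually_elim (auto simp: Y_def divide_inverse intro: tendsto_mult tendsto_inverse)
  then show ?thesis using strict_mono_o[OF r1 r2] unfolding k1_def by (auto simp: o_def)
qed

(* Along a sequence with Y (k n) \<rightarrow> Y l a.e., the pairings converge: by Scheffe the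
   p_dual-th powers converge in L^1, hence by Young's inequality so do the products F Y. *)
lemma pairing_tendsto:
  assumes kl: "k \<longlonglongrightarrow> l" and Yae: "AE w in \<mu>. (\<lambda>n. Y (k n) w) \<longlonglongrightarrow> Y l w"
  shows "(\<lambda>n. \<integral>w. g (k n) w * h w \<partial>\<mu>) \<longlonglongrightarrow> (\<integral>w. g l w * h w \<partial>\<mu>)"
proof -
  have Yp_int: "(\<lambda>n. \<integral>w. \<bar>Y (k n) w\<bar> powr p_dual \<partial>\<mu>) \<longlonglongrightarrow> (\<integral>w. \<bar>Y l w\<bar> powr p_dual \<partial>\<mu>)"
    unfolding Y_moment by (rule integral_tendsto_of_L1[OF W_integrable W_integrable W_L1_cont[OF kl]])
  have YpL1: "(\<lambda>n. \<integral>w. \<bar>\<bar>Y (k n) w\<bar> powr p_dual - \<bar>Y l w\<bar> powr p_dual\<bar> \<partial>\<mu>) \<longlonglongrightarrow> 0"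
  proof (rule scheffe_nonneg[OF Y_moment_integrable Y_moment_integrable _ _ Yp_int])
    show "AE x in \<mu>. (\<lambda>n. \<bar>Y (k n) x\<bar> powr p_dual) \<longlonglongrightarrow> \<bar>Y l x\<bar> powr p_dual"
      using Yae by eventually_elim (rule tendsto_powr', use p_dual_gt in \<open>auto intro!: tendsto_intros\<close>)
  qed auto
  have "(\<lambda>n. \<integral>w. \<bar>F w * Y (k n) w - F w * Y l w\<bar> \<partial>\<mu>) \<longlonglongrightarrow> 0"
  proof (rule L1_convergence_by_converging_domination[where G="\<lambda>n w. \<bar>F w\<bar> powr p / p + \<bar>Y (k n) w\<bar> powr p_dual / p_dual"
        and Gl="\<lambda>w. \<bar>F w\<bar> powr p / p + \<bar>Y l w\<bar> powr p_dual / p_dual"])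
    have "(\<integral>w. \<bar>\<bar>F w\<bar> powr p / p + \<bar>Y (k n) w\<bar> powr p_dual / p_dual - (\<bar>F w\<bar> powr p / p + \<bar>Y l w\<bar> powr p_dual / p_dual)\<bar> \<partial>\<mu>)
        = (\<integral>w. \<bar>\<bar>Y (k n) w\<bar> powr p_dual - \<bar>Y l w\<bar> powr p_dual\<bar> \<partial>\<mu>) / p_dual" for n
    proof -
      have eq: "\<bar>a / p + b / q - (a / p + c / q)\<bar> = \<bar>b - c\<bar> / q" if "0 < q" for a b c q :: real
        using that by (simp add: diff_divide_distrib[symmetric] abs_divide)
      have pos: "0 < p_dual" using p_dual_gt by simp
      have "(\<integral>w. \<bar>\<bar>F w\<bar> powr p / p + \<bar>Y (k n) w\<bar> powr p_dual / p_dual - (\<bar>F w\<bar> powr p / p + \<bar>Y l w\<bar> powr p_dual / p_dual)\<bar> \<partial>\<mu>)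
        = (\<integral>w. \<bar>\<bar>Y (k n) w\<bar> powr p_dual - \<bar>Y l w\<bar> powr p_dual\<bar> / p_dual \<partial>\<mu>)"
        by (intro Bochner_Integration.integral_cong refl eq[OF pos])
      then show ?thesis by simp
    qed
    moreover have "(\<lambda>n. (\<integral>w. \<bar>\<bar>Y (k n) w\<bar> powr p_dual - \<bar>Y l w\<bar> powr p_dual\<bar> \<partial>\<mu>) / p_dual) \<longlonglongrightarrow> 0 / p_dual"
      by (intro tendsto_divide YpL1 tendsto_const) (use p_dual_gt in auto)
    ultimately show "(\<lambda>n. \<integral>w. \<bar>\<bar>F w\<bar> powr p / p + \<bar>Y (k n) w\<bar> powr p_dual / p_dual
        - (\<bar>F w\<bar> powr p / p + \<bar>Y l w\<bar> powr p_dual / p_dual)\<bar> \<partial>\<mu>) \<longlonglongrightarrow> 0"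
      by simp
  qed (use Yae F_Lp Y_moment_integrable young_dual in \<open>auto elim!: eventually_mono intro: tendsto_mult\<close>)
  then have "(\<lambda>n. \<integral>w. F w * Y (k n) w \<partial>\<mu>) \<longlonglongrightarrow> (\<integral>w. F w * Y l w \<partial>\<mu>)"
    by (rule integral_tendsto_of_L1[OF FY_integrable FY_integrable])
  then show ?thesis by (simp add: pairing_eq)
qed

theorem pairing_continuous: "continuous_on UNIV (\<lambda>l. \<integral>w. g l w * h w \<partial>\<mu>)"
proof (rule continuous_on_by_subsequences)
  fix l and k :: "nat \<Rightarrow> real" assume kl: "k \<longlonglongrightarrow> l"
  then obtain r :: "nat \<Rightarrow> nat" where r: "strict_mono r" and "AE w in \<mu>. (\<lambda>n. Y (k (r n)) w) \<longlonglongrightarrow> Y l w"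
    using Y_AE_subseq by blast
  moreover have "(\<lambda>n. k (r n)) \<longlonglongrightarrow> l" using LIMSEQ_subseq_LIMSEQ[OF kl r] by (simp add: o_def)
  ultimately show "\<exists>r. strict_mono r \<and> (\<lambda>n. \<integral>w. g (k (r n)) w * h w \<partial>\<mu>) \<longlonglongrightarrow> (\<integral>w. g l w * h w \<partial>\<mu>)"
    using pairing_tendsto by blast
qed

end

theorem (in weak_continuity) cond_exp_weakly_continuous:
  assumes "1 \<le> p'" "p' < p" and [measurable]: "h \<in> borel_measurable \<mu>"
    and "if p' = 1 then (\<exists>C. AE w in \<mu>. \<bar>h w\<bar> \<le> C) else integrable \<mu> (\<lambda>w. \<bar>h w\<bar> powr (p' / (p' - 1)))"
  shows "continuous_on UNIV (\<lambda>l. \<integral>w. g l w * h w \<partial>\<mu>)"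
proof -
  obtain D K Q where "integrable \<mu> D" "0 \<le> K" "1 \<le> Q"
    "AE w in \<mu>. \<forall>x\<ge>0. \<bar>h w\<bar> powr (p / (p - 1)) * x powr (p / (p - 1) - 1) \<le> D w + K * (1 + x powr Q)"
    using dual_exponent_domination[OF p_gt assms(1,2,4)] by blast
  then interpret dual_test \<mu> U L g F p h D K Q by unfold_locales auto
  show ?thesis by (rule pairing_continuous)
qed

lemma tendsto_0_at_sequentially:
  fixes f :: "real \<Rightarrow> real"
  assumes "(f \<longlongrightarrow> 0) (at l)" "f l = 0" "k \<longlonglongrightarrow> l"
  shows "(\<lambda>n. f (k n)) \<longlonglongrightarrow> 0"
  using isCont_tendsto_compose[of l f, OF _ assms(3)] assms(1,2) by (simp add: isCont_def)

(* On Wiener space, the perturbations U l = perturb (ud l) satisfy the convergence-in-probability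
   hypothesis of weak_continuity: along a subsequence the perturbed paths converge pointwise a.s.,
   which makes them eventually enter every cylinder set containing the limit path. *)
lemma perturb_images_conv:
  assumes "prob_space \<mu>" and sets_\<mu>: "sets \<mu> = sets path_space"
    and sqint: "\<And>l. sq_int_process \<mu> (ud l)"
    and diff: "\<And>l. \<exists>D. sq_int_process \<mu> D \<and>
        ((\<lambda>h. \<integral>(s, w). (norm ((1 / h) *\<^sub>R (ud (l + h) s w - ud l s w) - D s w))\<^sup>2 \<partial>time_path \<mu>)
          \<longlongrightarrow> 0) (at 0)"
    and dens: "\<And>l. image_density \<mu> (perturb (ud l)) (L l)"
    and L1: "\<And>k l. k \<longlonglongrightarrow> l \<Longrightarrow> (\<lambda>n. \<integral>w. \<bar>L (k n) w - L l w\<bar> \<partial>\<mu>) \<longlonglongrightarrow> 0"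
    and kl: "k \<longlonglongrightarrow> l"
  shows "\<exists>r::nat\<Rightarrow>nat. strict_mono r \<and> (\<forall>f \<in> borel_measurable \<mu>.
    conv_in_prob \<mu> (\<lambda>n w. f (perturb (ud (k (r n))) w)) (\<lambda>w. f (perturb (ud l) w)))"
proof -
  interpret prob_space \<mu> by fact
  have space_\<mu>: "space \<mu> = path_carrier"
    using sets_eq_imp_space_eq[OF sets_\<mu>] by (simp add: path_space_def space_filt)
  obtain r :: "nat \<Rightarrow> nat" where r: "strict_mono r"
    and pc: "AE w in \<mu>. \<forall>t. (\<lambda>n. perturb (ud (k (r n))) w t) \<longlonglongrightarrow> perturb (ud l) w t"
    using perturb_conv_AE_subseq[OF assms(1) sqint drift_L2_continuous[OF sqint diff kl]] by blast
  have krl: "(\<lambda>n. k (r n)) \<longlonglongrightarrow> l" using LIMSEQ_subseq_LIMSEQ[OF kl r] by (simp add: o_def)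
  have in_carrier: "perturb (ud j) w \<in> path_carrier" if "w \<in> space \<mu>" for j w
    using measurable_space[of "perturb (ud j)" \<mu> \<mu> w] dens[of j] that by (simp add: image_density_def space_\<mu>)
  interpret converging_images \<mu> "\<lambda>n. perturb (ud (k (r n)))" "perturb (ud l)" "\<lambda>n. L (k (r n))" "L l" cylinders
  proof unfold_locales
    show "sigma_sets (space \<mu>) cylinders = sets \<mu>"
      using cylinders_generate by (simp add: space_\<mu> sets_\<mu> path_space_def)
    fix A :: "'a path set" assume A: "A \<in> cylinders"
    show "AE w in \<mu>. perturb (ud l) w \<in> A \<longrightarrow> eventually (\<lambda>n. perturb (ud (k (r n))) w \<in> A) sequentially"
      using pc AE_space
    proof eventually_elim
      case (elim w)
      show ?case
        using cylinders_eventually[OF A, of "\<lambda>n. perturb (ud (k (r n))) w" "perturb (ud l) w"]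
          elim in_carrier by blast
    qed
  qed (use dens L1[OF krl] cylinders_Int_stable cylinders_subset in \<open>auto simp: space_\<mu>\<close>)
  show ?thesis using r images_conv_measurable by blast
qed

theorem proposition1:
  fixes \<mu> :: "'d::finite path measure"
    and ud :: "real \<Rightarrow> real \<Rightarrow> 'd path \<Rightarrow> real^'d"
    and I :: "real \<Rightarrow> 'd path \<Rightarrow> real"
    and L :: "real \<Rightarrow> 'd path \<Rightarrow> real"
    and F :: "'d path \<Rightarrow> real"
    and g :: "real \<Rightarrow> 'd path \<Rightarrow> real"
    and p :: real
  assumes wiener: "wiener_measure \<mu>"
    and adapt: "\<And>l. adapted \<mu> (ud l)"
    and sqint: "\<And>l. sq_int_process \<mu> (ud l)"
    and ito: "\<And>l. ito_integral \<mu> (ud l) (I l)"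
    and girsanov: "\<And>l. (\<integral>\<^sup>+ w. ennreal (exp (- I l w - H_norm_sq (\<lambda>s. ud l s w) / 2)) \<partial>\<mu>) = 1"
    and diff: "\<And>l. \<exists>D. sq_int_process \<mu> D \<and>
        ((\<lambda>h. \<integral>(s, w). (norm ((1 / h) *\<^sub>R (ud (l + h) s w - ud l s w) - D s w))\<^sup>2 \<partial>time_path \<mu>)
          \<longlongrightarrow> 0) (at 0)"
    and bdd: "\<exists>C. \<forall>l. AE w in \<mu>. H_norm_sq (\<lambda>s. ud l s w) \<le> C"
    and U_meas: "\<And>l. perturb (ud l) \<in> measurable \<mu> \<mu>"
    and L_meas: "\<And>l. L l \<in> borel_measurable \<mu>"
    and L_nonneg: "\<And>l w. 0 \<le> L l w"
    and L_density: "\<And>l. distr \<mu> \<mu> (perturb (ud l)) = density \<mu> (\<lambda>w. ennreal (L l w))"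
    and L_pos: "\<And>l. AE w in \<mu>. 0 < L l w"
    and L_as_cont: "AE w in \<mu>. continuous_on UNIV (\<lambda>l. L l w)"
    and Linv_as_cont: "AE w in \<mu>. continuous_on UNIV (\<lambda>l. 1 / L l w)"
    and L_Lp: "\<And>q l. 1 \<le> q \<Longrightarrow> integrable \<mu> (\<lambda>w. \<bar>L l w\<bar> powr q) \<and>
        ((\<lambda>k. \<integral>w. \<bar>L k w - L l w\<bar> powr q \<partial>\<mu>) \<longlongrightarrow> 0) (at l)"
    and Linv_Lp: "\<And>q l. 1 \<le> q \<Longrightarrow> integrable \<mu> (\<lambda>w. \<bar>1 / L l w\<bar> powr q) \<and>
        ((\<lambda>k. \<integral>w. \<bar>1 / L k w - 1 / L l w\<bar> powr q \<partial>\<mu>) \<longlongrightarrow> 0) (at l)"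
    and p_gt: "1 < p"
    and F_meas: "F \<in> borel_measurable \<mu>"
    and F_Lp: "integrable \<mu> (\<lambda>w. \<bar>F w\<bar> powr p)"
    and g_meas: "\<And>l. g l \<in> borel_measurable \<mu>"
    and g_cond: "\<And>l. AE w in \<mu>.
        real_cond_exp \<mu> (vimage_algebra (space \<mu>) (perturb (ud l)) \<mu>) F w = g l (perturb (ud l) w)"
  shows "\<forall>p'. 1 \<le> p' \<and> p' < p \<longrightarrow>
      (\<forall>l. integrable \<mu> (\<lambda>w. \<bar>g l w\<bar> powr p')) \<and>
      (\<forall>h \<in> borel_measurable \<mu>.
         (if p' = 1 then (\<exists>C. AE w in \<mu>. \<bar>h w\<bar> \<le> C)
          else integrable \<mu> (\<lambda>w. \<bar>h w\<bar> powr (p' / (p' - 1)))) \<longrightarrow>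
         continuous_on UNIV (\<lambda>l. \<integral>w. g l w * h w \<partial>\<mu>))"
proof -
  have prob: "prob_space \<mu>" and sets_\<mu>: "sets \<mu> = sets path_space"
    using wiener by (auto simp: wiener_measure_def)
  interpret prob_space \<mu> by (rule prob)
  have dens: "image_density \<mu> (perturb (ud l)) (L l)" for l
    using U_meas L_meas L_nonneg L_density by (simp add: image_density_def)
  have L1: "(\<lambda>n. \<integral>w. \<bar>L (k n) w - L l w\<bar> \<partial>\<mu>) \<longlonglongrightarrow> 0" if "k \<longlonglongrightarrow> l" for k l
    using tendsto_0_at_sequentially[of "\<lambda>j. \<integral>w. \<bar>L j w - L l w\<bar> \<partial>\<mu>" l k] that L_Lp[of 1 l] by simp
  have Linv: "(\<lambda>n. \<integral>w. \<bar>1 / L (k n) w - 1 / L l w\<bar> powr q \<partial>\<mu>) \<longlonglongrightarrow> 0" if "1 \<le> q" "k \<longlonglongrightarrow> l" for q k l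
    using tendsto_0_at_sequentially[of "\<lambda>j. \<integral>w. \<bar>1 / L j w - 1 / L l w\<bar> powr q \<partial>\<mu>" l k] that Linv_Lp[OF that(1)]
    by simp
  have Linv_int: "integrable \<mu> (\<lambda>w. (1 / L l w) powr q)" if "1 \<le> q" for q l
    using Linv_Lp[OF that] L_nonneg by simp
  interpret weak_continuity \<mu> "\<lambda>l. perturb (ud l)" L g F p
    by unfold_locales (rule dens L_pos Linv_int p_gt F_meas F_Lp g_meas g_cond L_as_cont Linv_as_cont
        L1 Linv perturb_images_conv[OF prob sets_\<mu> sqint diff dens L1] | assumption)+
  show ?thesis using cond_exp_version_Lp cond_exp_weakly_continuous by blast
qed

end
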